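(* Let $M$, $x$, $T$, $B$, the encoding $\langle\cdot\rangle$ and the coin set $\mathcal{C}$ be as in the context. Define $$W:=\langle C_1\rangle\cdot B^{(T-1)T},$$ where $C_1$ is the configuration with state $q_0$, head position $1$, and tape $\$\,x_1\cdots x_n\perp^{T-n-1}$. Define the query coin $$c^*:=c_{\mathrm{transition}}(q_{\mathrm{accept}},\$,\perp,\perp,2,T)=g(\$)B^{T-1}+p(q_{\mathrm{accept}},\perp)B^{T-2}+g(\perp)B^{T-3}.$$ Then $M$ accepts $x$ if and only if $c^*$ belongs to the greedy set of coin change $\mathcal{G}$ with respect to $W$ and $\mathcal{C}$.
   Context: Turing machine. $M=\langle Q,\Gamma,\Sigma,\delta,q_0,q_{\mathrm{accept}},q_{\mathrm{reject}}\rangle$ is a deterministic single-tape Turing machine: - $\perp\in\Gamma$ is the blank symbol and $\Sigma\subseteq\Gamma\setminus\{\perp\}$. - $F=\{q_{\mathrm{accept}},q_{\mathrm{reject}}\}$ is the set of halting states. - $\delta:(Q\setminus F)\times\Gamma\to Q\times\Gamma\times\{L,R\}$ is the transition function. Assumptions on $M$: - The first tape cell always holds a left endmarker $\$\in\Gamma$. Whenever the head reads $\$$ in a state $q\notin F$, we have $\delta(q,\$)=(q',\$,R)$ for some $q'$. - Before entering a halting state, the head moves to the endmarker, then overwrites cells 2 and 3 with $\perp$, and halts over cell 2 in the halting state. - On input $x=x_1\cdots x_n$, $M$ halts within $T=C_M n^{\ell}$ steps, where $T\ge n+3$. Hence only tape cells $1,\dots,T$ are used, and the head never reaches cell $T$.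 A configuration consists of a state $q$, a head position $h$ with $1\le h\le T$, and tape contents $a_1\cdots a_T\in\Gamma^T$. Numerical encoding: - Fix bijections $f:Q\to\{1,\dots,s\}$ and $g:\Gamma\to\{1,\dots,k\}$, where $s=|Q|$ and $k=|\Gamma|$. - Encode a pair $(q,a)$ by $p(q,a):=f(q)k+g(a)$. - Fix an integer base $B\ge(s+1)k+2$. - A digit string $d_1\cdots d_T$ in base $B$ denotes $\sum_{i=1}^T d_iB^{T-i}$. - For a configuration $C$ with state $q$, head position $h$ and tape $a_1\cdots a_T$, set $\langle C\rangle$ to be the digit string with $d_h=p(q,a_h)$ and $d_i=g(a_i)$ for $i\ne h$. Coin set $\mathcal{C}$ (with $B^{(-1)T}:=0$) consists of exactly the following three kinds of coins. (i) Copy coins. For $1\le i,j\le T$ and $a\in\Gamma$: $$c_{\mathrm{copy}}(a,i,j)=g(a)B^{T-i}\big(B^{(T-j)T}-B^{(T-j-1)T}\big).$$ (ii) Transition coins. For $2\le i\le T-1$, $1\le j\le T$, $q\in Q$, and $a^-,a,a^+\in\Gamma$: $$c_{\mathrm{transition}}(q,a^-,a,a^+,i,j)=u\,B^{(T-j)T}-v\,B^{(T-j-1)T},$$ where $u=g(a^-)B^{T-i+1}+p(q,a)B^{T-i}+g(a^+)B^{T-i-1}$ and $v$ is defined by cases: - if $q\notin F$ and $\delta(q,a)=(q',a',L)$: $v=p(q',a^-)B^{T-i+1}+g(a')B^{T-i}+g(a^+)B^{T-i-1}$; - if $q\notin F$ and $\delta(q,a)=(q',a',R)$: $v=g(a^-)B^{T-i+1}+g(a')B^{T-i}+p(q',a^+)B^{T-i-1}$;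 - if $q\in F$: $v=u$. (iii) Left-end transition coins. For $q\in Q\setminus F$, $a^+\in\Gamma$, and $1\le j\le T$, with $\delta(q,\$)=(q',\$,R)$: $$c^{\text{left-end}}_{\mathrm{transition}}(q,a^+,j)=\big(p(q,\$)B^{T-1}+g(a^+)B^{T-2}\big)B^{(T-j)T}-\big(g(\$)B^{T-1}+p(q',a^+)B^{T-2}\big)B^{(T-j-1)T}.$$ Greedy set of coin change with respect to $W$ and $\mathcal{C}$: start with $\mathcal{G}=\emptyset$ and remaining amount $W'=W$. Repeatedly select the largest coin $c\in\mathcal{C}$ with $c\le W'$, add $c$ to $\mathcal{G}$, and set $W'\gets W'-c$. *)

theory Defs
  imports Main "HOL-Library.Cardinality"
begin

datatype dir = L | R

text \<open>A configuration: (state, head position, tape). Tape cells are indexed from 1.\<close>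
type_synonym ('q, 'g) config = "'q \<times> nat \<times> (nat \<Rightarrow> 'g)"

definition tm_step ::
  "('q \<Rightarrow> 'g \<Rightarrow> 'q \<times> 'g \<times> dir) \<Rightarrow> 'q set \<Rightarrow> ('q, 'g) config \<Rightarrow> ('q, 'g) config" where
  "tm_step \<delta> F c = (case c of (q, h, a) \<Rightarrow>
     if q \<in> F then (q, h, a)
     else (case \<delta> q (a h) of (q', a', d) \<Rightarrow>
             (q', if d = L then h - 1 else h + 1, a(h := a'))))"

definition tm_run ::
  "('q \<Rightarrow> 'g \<Rightarrow> 'q \<times> 'g \<times> dir) \<Rightarrow> 'q set \<Rightarrow> ('q, 'g) config \<Rightarrow> nat \<Rightarrow> ('q, 'g) config" where
  "tm_run \<delta> F c t = (tm_step \<delta> F ^^ t) c"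

definition init_config :: "'q \<Rightarrow> 'g \<Rightarrow> 'g \<Rightarrow> 'g list \<Rightarrow> ('q, 'g) config" where
  "init_config q0 dollar blank x =
     (q0, 1, \<lambda>i. if i = 1 then dollar
                 else if 2 \<le> i \<and> i \<le> length x + 1 then x ! (i - 2) else blank)"

text \<open>Powers of the base with integer exponent; negative exponents give 0
  (this realises the convention B^((-1)T) := 0).\<close>
definition bpow :: "nat \<Rightarrow> int \<Rightarrow> int" where
  "bpow B e = (if e < 0 then 0 else int B ^ nat e)"

definition pcode :: "('q \<Rightarrow> nat) \<Rightarrow> ('g \<Rightarrow> nat) \<Rightarrow> nat \<Rightarrow> 'q \<Rightarrow> 'g \<Rightarrow> int" where
  "pcode f g k q a = int (f q * k + g a)"

definition encode ::
  "('q \<Rightarrow> nat) \<Rightarrow> ('g \<Rightarrow> nat) \<Rightarrow> nat \<Rightarrow> nat \<Rightarrow> nat \<Rightarrow> ('q, 'g) config \<Rightarrow> int" where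
  "encode f g k B T c = (case c of (q, h, a) \<Rightarrow>
     (\<Sum>i = 1..T. (if i = h then pcode f g k q (a i) else int (g (a i)))
                  * bpow B (int T - int i)))"

definition copy_coin :: "('g \<Rightarrow> nat) \<Rightarrow> nat \<Rightarrow> nat \<Rightarrow> 'g \<Rightarrow> nat \<Rightarrow> nat \<Rightarrow> int" where
  "copy_coin g B T a i j =
     int (g a) * bpow B (int T - int i)
       * (bpow B ((int T - int j) * int T) - bpow B ((int T - int j - 1) * int T))"

definition trans_coin ::
  "('q \<Rightarrow> 'g \<Rightarrow> 'q \<times> 'g \<times> dir) \<Rightarrow> 'q set \<Rightarrow> ('q \<Rightarrow> nat) \<Rightarrow> ('g \<Rightarrow> nat) \<Rightarrow> nat \<Rightarrow> nat \<Rightarrow> nat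
     \<Rightarrow> 'q \<Rightarrow> 'g \<Rightarrow> 'g \<Rightarrow> 'g \<Rightarrow> nat \<Rightarrow> nat \<Rightarrow> int" where
  "trans_coin \<delta> F f g k B T q am a ap i j =
     (let u = int (g am) * bpow B (int T - int i + 1)
              + pcode f g k q a * bpow B (int T - int i)
              + int (g ap) * bpow B (int T - int i - 1);
          v = (if q \<in> F then u
               else (case \<delta> q a of
                       (q', a', L) \<Rightarrow> pcode f g k q' am * bpow B (int T - int i + 1)
                                     + int (g a') * bpow B (int T - int i)
                                     + int (g ap) * bpow B (int T - int i - 1)
                     | (q', a', R) \<Rightarrow> int (g am) * bpow B (int T - int i + 1)
                                     + int (g a') * bpow B (int T - int i)
                                     + pcode f g k q' ap * bpow B (int T - int i - 1)))
      in u * bpow B ((int T - int j) * int T) - v * bpow B ((int T - int j - 1) * int T))"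

text \<open>Left-end transition coins (q' is the state with delta(q, dollar) = (q', dollar, R)).\<close>
definition leftend_coin ::
  "('q \<Rightarrow> 'g \<Rightarrow> 'q \<times> 'g \<times> dir) \<Rightarrow> ('q \<Rightarrow> nat) \<Rightarrow> ('g \<Rightarrow> nat) \<Rightarrow> nat \<Rightarrow> nat \<Rightarrow> nat
     \<Rightarrow> 'g \<Rightarrow> 'q \<Rightarrow> 'g \<Rightarrow> nat \<Rightarrow> int" where
  "leftend_coin \<delta> f g k B T dollar q ap j =
     (let q' = fst (\<delta> q dollar)
      in (pcode f g k q dollar * bpow B (int T - 1) + int (g ap) * bpow B (int T - 2))
           * bpow B ((int T - int j) * int T)
         - (int (g dollar) * bpow B (int T - 1) + pcode f g k q' ap * bpow B (int T - 2))
           * bpow B ((int T - int j - 1) * int T))"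

definition coin_set ::
  "('q \<Rightarrow> 'g \<Rightarrow> 'q \<times> 'g \<times> dir) \<Rightarrow> 'q set \<Rightarrow> ('q \<Rightarrow> nat) \<Rightarrow> ('g \<Rightarrow> nat) \<Rightarrow> nat \<Rightarrow> nat \<Rightarrow> nat
     \<Rightarrow> 'g \<Rightarrow> int set" where
  "coin_set \<delta> F f g k B T dollar =
     {copy_coin g B T a i j | a i j. 1 \<le> i \<and> i \<le> T \<and> 1 \<le> j \<and> j \<le> T}
   \<union> {trans_coin \<delta> F f g k B T q am a ap i j | q am a ap i j.
        2 \<le> i \<and> i \<le> T - 1 \<and> 1 \<le> j \<and> j \<le> T}
   \<union> {leftend_coin \<delta> f g k B T dollar q ap j | q ap j. q \<notin> F \<and> 1 \<le> j \<and> j \<le> T}"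

primrec greedy_rem :: "int set \<Rightarrow> int \<Rightarrow> nat \<Rightarrow> int" where
  "greedy_rem C W 0 = W"
| "greedy_rem C W (Suc t) =
     (if \<exists>c\<in>C. c \<le> greedy_rem C W t
      then greedy_rem C W t - Max {c \<in> C. c \<le> greedy_rem C W t}
      else greedy_rem C W t)"

definition greedy_set :: "int set \<Rightarrow> int \<Rightarrow> int set" where
  "greedy_set C W = {Max {c \<in> C. c \<le> greedy_rem C W t} | t. \<exists>c\<in>C. c \<le> greedy_rem C W t}"

end

theory Submission
  imports Defs
begin

text \<open>Read a multiple of \<open>B^T\<close> as a tableau of \<open>T\<close> rows of \<open>T\<close> base-\<open>B\<close> digits, row \<open>j\<close>
  carrying the weight \<open>B^((T - j) T)\<close>; \<open>W\<close> is the tableau whose first row encodes \<open>C_1\<close>.  Every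
  coin takes a window of one, two or three digits out of some row \<open>j\<close> and writes its image under
  one step of \<open>M\<close> into row \<open>j + 1\<close>.  Since all digits are at most \<open>B - 2\<close> and the digit of a
  cell determines its symbol and whether the head is on it, the largest coin not exceeding the
  remainder always moves the leftmost unprocessed window of the current row: a coin of an
  earlier row is too large, a coin of a later row or with a smaller leading window is smaller,
  and a coin with the same leading window is that coin.  So the greedy algorithm writes the
  computation \<open>C_1, ..., C_T\<close> row by row.  In the halted last row the head is on cell 2 over
  \<open>$ \<bottom> \<bottom>\<close>, so the coin taken there is \<open>c*\<close> exactly when the final state is accepting, and
  no other coin taken by the greedy algorithm equals \<open>c*\<close>.\<close>

section \<open>Positional notation\<close>

definition digits_from :: "int \<Rightarrow> nat \<Rightarrow> (nat \<Rightarrow> int) \<Rightarrow> nat \<Rightarrow> int" where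
  "digits_from b T d m = (\<Sum>i\<in>{m..T}. d i * b ^ (T - i))"

definition digits_before :: "int \<Rightarrow> nat \<Rightarrow> (nat \<Rightarrow> int) \<Rightarrow> nat \<Rightarrow> int" where
  "digits_before b T d m = (\<Sum>i\<in>{1..<m}. d i * b ^ (T - i))"

lemma digits_from_Suc:
  "m \<le> T \<Longrightarrow> digits_from b T d m = d m * b ^ (T - m) + digits_from b T d (Suc m)"
  unfolding digits_from_def by (simp add: sum.atLeast_Suc_atMost)

lemma digits_from_beyond: "T < m \<Longrightarrow> digits_from b T d m = 0"
  unfolding digits_from_def by simp

lemma digits_before_Suc:
  "1 \<le> m \<Longrightarrow> digits_before b T d (Suc m) = digits_before b T d m + d m * b ^ (T - m)"
  unfolding digits_before_def by (simp add: sum.atLeastLessThan_Suc)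

lemma digits_before_add_from:
  assumes "1 \<le> m" "m \<le> Suc T"
  shows "digits_before b T d m + digits_from b T d m = digits_from b T d 1"
  using sum.atLeastLessThan_concat[OF assms, of "\<lambda>i. d i * b ^ (T - i)"]
  by (simp only: digits_before_def digits_from_def atLeastLessThanSuc_atLeastAtMost)

lemma digits_from_bounds:
  assumes "m \<le> Suc T" "\<And>i. m \<le> i \<Longrightarrow> i \<le> T \<Longrightarrow> 0 \<le> d i \<and> d i \<le> b - 1" "1 \<le> b"
  shows "0 \<le> digits_from b T d m \<and> digits_from b T d m < b ^ (Suc T - m)"
  using assms
proof (induction "Suc T - m" arbitrary: m)
  case 0
  then show ?case by (simp add: digits_from_beyond)
next
  case (Suc n)
  then have mT: "m \<le> T" by simp
  have IH: "0 \<le> digits_from b T d (Suc m) \<and> digits_from b T d (Suc m) < b ^ (T - m)"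
    using Suc(1)[of "Suc m"] Suc(2-5) mT by simp
  have dm: "0 \<le> d m" "d m \<le> b - 1" using Suc(4)[of m] mT by auto
  have p: "0 < b ^ (T - m)" using Suc(5) by simp
  have "d m * b ^ (T - m) \<le> (b - 1) * b ^ (T - m)" using dm p by (intro mult_right_mono) auto
  moreover have "0 \<le> d m * b ^ (T - m)" using dm p by simp
  moreover have "b ^ (Suc T - m) = b * b ^ (T - m)" using mT by (simp add: Suc_diff_le)
  ultimately show ?case using digits_from_Suc[OF mT, of b d] IH by (simp add: algebra_simps)
qed

lemma digits_from_le:
  assumes "1 \<le> m" "m \<le> T" "\<And>i. m \<le> i \<Longrightarrow> i \<le> T \<Longrightarrow> 0 \<le> d i \<and> d i \<le> b - 2" "2 \<le> b"
  shows "digits_from b T d m \<le> b ^ (Suc T - m) - 2"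
  using assms
proof (induction "T - m" arbitrary: m)
  case 0
  then have "m = T" by simp
  then show ?case using digits_from_Suc[of T T b d] 0 by (simp add: digits_from_beyond)
next
  case (Suc n)
  then have mT: "m < T" by simp
  have IH: "digits_from b T d (Suc m) \<le> b ^ (T - m) - 2"
    using Suc(1)[of "Suc m"] Suc(2-6) mT by simp
  have dm: "0 \<le> d m" "d m \<le> b - 2" using Suc(5)[of m] mT by auto
  have p: "0 < b ^ (T - m)" using Suc(6) by simp
  have "d m * b ^ (T - m) \<le> (b - 2) * b ^ (T - m)" using dm p by (intro mult_right_mono) auto
  moreover have "b ^ (Suc T - m) = b * b ^ (T - m)" using mT by (simp add: Suc_diff_le)
  moreover have "(b - 2) * b ^ (T - m) = b * b ^ (T - m) - 2 * b ^ (T - m)"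
    by (simp add: algebra_simps)
  ultimately show ?case using IH p digits_from_Suc[of m T b d] mT by linarith
qed

lemma digits_from_less:
  assumes "m < n" "n \<le> Suc T" "\<And>i. m \<le> i \<Longrightarrow> i < n \<Longrightarrow> 0 < d i" "0 < b"
  shows "digits_from b T d n < digits_from b T d m"
proof -
  have "digits_from b T d m = (\<Sum>i\<in>{m..<n}. d i * b ^ (T - i)) + digits_from b T d n"
    using sum.atLeastLessThan_concat[of m n "Suc T" "\<lambda>i. d i * b ^ (T - i)"] assms(1,2)
    by (simp add: digits_from_def atLeastLessThanSuc_atLeastAtMost)
  moreover have "0 < (\<Sum>i\<in>{m..<n}. d i * b ^ (T - i))"
    using assms by (intro sum_pos) auto
  ultimately show ?thesis by simp
qed

lemma digits_before_bounds:
  assumes "1 \<le> m" "m \<le> Suc T" "\<And>i. 1 \<le> i \<Longrightarrow> i \<le> T \<Longrightarrow> 0 \<le> d i \<and> d i \<le> b - 1" "1 \<le> b"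
  shows "0 \<le> digits_before b T d m \<and> digits_before b T d m \<le> b^T - b^(Suc T - m)"
  using assms
proof (induction m)
  case 0
  then show ?case by simp
next
  case (Suc m)
  show ?case
  proof (cases "m = 0")
    case True
    then show ?thesis by (simp add: digits_before_def)
  next
    case False
    then have m1: "1 \<le> m" "m \<le> T" using Suc by auto
    have IH: "0 \<le> digits_before b T d m \<and> digits_before b T d m \<le> b^T - b^(Suc T - m)"
      using Suc m1 by simp
    have dm: "0 \<le> d m" "d m \<le> b - 1" using Suc(4)[of m] m1 by auto
    have p: "0 < b^(T-m)" using Suc(5) by simp
    have "d m * b^(T-m) \<le> (b - 1) * b^(T-m)" using dm p by (intro mult_right_mono) auto
    moreover have "0 \<le> d m * b^(T-m)" using dm p by simp
    moreover have "b^(Suc T - m) = b * b^(T-m)" using m1 by (simp add: Suc_diff_le)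
    moreover have "Suc T - Suc m = T - m" by simp
    ultimately show ?thesis using digits_before_Suc[OF m1(1), of b T d] IH
      by (simp add: algebra_simps)
  qed
qed

lemma mult_le_add_remainder_cancel:
  fixes P x y r :: int
  assumes "0 < P" "0 \<le> r" "r < P" "P * x \<le> P * y + r"
  shows "x \<le> y"
proof (rule ccontr)
  assume "\<not> x \<le> y"
  then have "y + 1 \<le> x" by simp
  then have "P * (y + 1) \<le> P * x" using assms(1) by (intro mult_left_mono) auto
  then show False using assms by (simp add: algebra_simps)
qed

lemma base_digits2_eq:
  fixes b x0 x1 y0 y1 :: int
  assumes "0 \<le> x0" "x0 < b" "0 \<le> y0" "y0 < b" "x1 * b + x0 = y1 * b + y0"
  shows "x0 = y0 \<and> x1 = y1"
proof -
  have "(x1 * b + x0) mod b = x0 mod b" "(y1 * b + y0) mod b = y0 mod b" by simp_all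
  moreover have "x0 mod b = x0" "y0 mod b = y0" using assms by (simp_all add: mod_pos_pos_trivial)
  ultimately have e: "x0 = y0" using assms(5) by metis
  then have "x1 * b = y1 * b" using assms(5) by simp
  then show ?thesis using e assms(2) assms(1) by auto
qed

lemma base_digits3_eq:
  fixes b x0 x1 x2 y0 y1 y2 :: int
  assumes "0 \<le> x0" "x0 < b" "0 \<le> y0" "y0 < b" "0 \<le> x1" "x1 < b" "0 \<le> y1" "y1 < b"
    "(x2 * b + x1) * b + x0 = (y2 * b + y1) * b + y0"
  shows "x0 = y0 \<and> x1 = y1 \<and> x2 = y2"
  using base_digits2_eq[OF assms(1-4,9)] base_digits2_eq[OF assms(5-8)] by auto

lemma base_digit_le_of_le:
  fixes b x y x' y' :: int
  assumes "x' * b + y' \<le> x * b + y" "y < b" "0 \<le> y'" "0 \<le> b"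
  shows "x' \<le> x"
proof (rule ccontr)
  assume "\<not> x' \<le> x"
  then have "(x + 1) * b \<le> x' * b" using assms(4) by (intro mult_right_mono) auto
  then show False using assms(1-3) by (simp add: algebra_simps)
qed

lemma two_digits_less:
  fixes b y z :: int
  assumes "0 \<le> y" "y \<le> b - 1" "0 \<le> z" "z \<le> b - 1" "1 \<le> b"
  shows "y * b^(Suc e) + z * b^e < b^(Suc (Suc e))"
proof -
  have p: "0 < b^e" using assms by simp
  have "y * (b*b^e) \<le> (b - 1) * (b*b^e)" using assms p by (intro mult_right_mono) auto
  moreover have "z * b^e \<le> (b - 1) * b^e" using assms p by (intro mult_right_mono) auto
  ultimately show ?thesis using p by (simp add: algebra_simps)
qed

lemma three_digits_less:
  fixes b x y z :: int
  assumes "0 \<le> x" "x \<le> b - 1" "0 \<le> y" "y \<le> b - 1" "0 \<le> z" "z \<le> b - 1" "1 \<le> b"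
  shows "x * b^(Suc (Suc e)) + y * b^(Suc e) + z * b^e < b^(Suc (Suc (Suc e)))"
proof -
  have p: "0 < b^e" using assms by simp
  have "x * (b*b*b^e) \<le> (b - 1) * (b*b*b^e)" using assms p by (intro mult_right_mono) auto
  moreover have "y * (b*b^e) \<le> (b - 1) * (b*b^e)" using assms p by (intro mult_right_mono) auto
  moreover have "z * b^e \<le> (b - 1) * b^e" using assms p by (intro mult_right_mono) auto
  ultimately show ?thesis using p by (simp add: algebra_simps)
qed

lemma three_digits_le:
  fixes b x y z :: int
  assumes "0 \<le> x" "x \<le> b - 2" "0 \<le> y" "y \<le> b - 2" "0 \<le> z" "z \<le> b - 2" "2 \<le> b"
  shows "x * b^(Suc (Suc e)) + y * b^(Suc e) + z * b^e \<le> b^(Suc (Suc (Suc e))) - 2"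
proof -
  have p: "1 \<le> b^e" using assms by simp
  have "x * b^(Suc (Suc e)) \<le> (b - 2) * b^(Suc (Suc e))"
    using assms p by (intro mult_right_mono) auto
  moreover have "y * b^(Suc e) \<le> (b - 2) * b^(Suc e)" using assms p by (intro mult_right_mono) auto
  moreover have "z * b^e \<le> (b - 2) * b^e" using assms p by (intro mult_right_mono) auto
  moreover have "(b - 2) * b^(Suc (Suc e)) = b^(Suc (Suc (Suc e))) - 2 * b^(Suc (Suc e))"
    "(b - 2) * b^(Suc e) = b^(Suc (Suc e)) - 2 * b^(Suc e)" "(b - 2) * b^e = b^(Suc e) - 2 * b^e"
    by (simp_all add: algebra_simps)
  moreover have "0 \<le> b^(Suc e)" "0 \<le> b^(Suc (Suc e))" using assms by simp_all
  ultimately show ?thesis using p by linarith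
qed

section \<open>Coins spanning two consecutive rows\<close>

text \<open>\<open>p\<close> and \<open>p'\<close> are the weights of two consecutive tableau rows; the row after the last
  one has weight \<open>0\<close>.\<close>

definition consecutive_scales :: "int \<Rightarrow> int \<Rightarrow> int \<Rightarrow> bool" where
  "consecutive_scales Z p p' \<longleftrightarrow> p' = 0 \<and> p = 1 \<or> 0 < p' \<and> p = Z * p'"

lemma consecutive_scales_lower_le:
  fixes Z p p' v :: int
  assumes "consecutive_scales Z p p'" "0 \<le> v" "v < Z"
  shows "v * p' \<le> p"
  using assms mult_right_mono[of v Z p'] unfolding consecutive_scales_def by auto

lemma coin_value_pos:
  fixes Z p p' u v :: int
  assumes "consecutive_scales Z p p'" "1 \<le> u" "2 \<le> Z" "Z - 1 \<le> u * Z - v"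
  shows "0 < u * p - v * p'"
  using assms(1) unfolding consecutive_scales_def
proof
  assume "p' = 0 \<and> p = 1" then show ?thesis using assms(2) by simp
next
  assume h: "0 < p' \<and> p = Z * p'"
  then have "u * p - v * p' = (u * Z - v) * p'" by (simp add: algebra_simps)
  moreover have "0 < (u * Z - v) * p'" using assms(3,4) h by (intro mult_pos_pos) auto
  ultimately show ?thesis by simp
qed

lemma src_le_of_coin_le_two_rows:
  fixes Z p p' u v A A' E :: int
  assumes "consecutive_scales Z p p'" "0 \<le> v" "v < Z" "0 \<le> A'" "A' + E \<le> Z"
    "A + 2 \<le> E" "u < E \<Longrightarrow> v < E" "u * p - v * p' \<le> A * p + A' * p'" "0 \<le> A"
  shows "u \<le> A"
  using assms(1) unfolding consecutive_scales_def
proof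
  assume "p' = 0 \<and> p = 1" then show ?thesis using assms(8) by simp
next
  assume h: "0 < p' \<and> p = Z * p'"
  then have "p' * (u * Z - v) \<le> p' * (A * Z + A')" using assms(8) by (simp add: algebra_simps)
  then have ineq: "u * Z - v \<le> A * Z + A'" using h by simp
  show ?thesis
  proof (rule ccontr)
    assume "\<not> u \<le> A"
    then consider "u = A + 1" | "A + 2 \<le> u" by linarith
    then show False
    proof cases
      case 1
      then have "v < E" using assms(6,7) by simp
      then show False using ineq 1 assms(5) by (simp add: algebra_simps)
    next
      case 2
      have "(A + 2) * Z \<le> u * Z" using 2 assms(2,3) by (intro mult_right_mono) auto
      then show False using ineq assms(2-6) assms(9) by (simp add: algebra_simps)
    qed
  qed
qed

lemma two_row_value_less:
  fixes Z p p' A A' :: int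
  assumes "consecutive_scales Z p p'" "0 \<le> A'" "A' < Z"
  shows "A * p + A' * p' < (A + 1) * p"
  using assms(1) unfolding consecutive_scales_def
proof
  assume "p' = 0 \<and> p = 1" then show ?thesis by simp
next
  assume h: "0 < p' \<and> p = Z * p'"
  then have "A' * p' < Z * p'" using assms(3) by simp
  then show ?thesis using h by (simp add: algebra_simps)
qed

lemma coin_earlier_row_exceeds:
  fixes u v Z A q q' p R :: int
  assumes "u * Z - v \<ge> Z - 1" "A \<le> Z - 2" "0 \<le> A" "0 \<le> p" "q = Z * q'" "p \<le> q'"
    "R < (A + 1) * p"
  shows "\<not> u * q - v * q' \<le> R"
proof -
  have c: "(A + 1) * q' \<le> (u * Z - v) * q'" using assms by (intro mult_right_mono) auto
  have d: "(A + 1) * p \<le> (A + 1) * q'" using assms by (intro mult_left_mono) auto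
  have "u * q - v * q' = (u * Z - v) * q'" using assms(5) by (simp add: algebra_simps)
  then show ?thesis using c d assms(7) by linarith
qed

lemma coin_later_row_le:
  fixes u v Z q q' p p' u0 v0 :: int
  assumes "0 \<le> u" "u \<le> Z - 1" "0 \<le> v" "0 \<le> q'" "q \<le> p'" "p = Z * p'"
    "u0 * Z - v0 \<ge> Z - 1" "0 \<le> p'"
  shows "u * q - v * q' \<le> u0 * p - v0 * p'"
proof -
  have a: "u * q \<le> u * p'" using assms by (intro mult_left_mono) auto
  have b: "u * p' \<le> (Z - 1) * p'" using assms by (intro mult_right_mono) auto
  have c: "(Z - 1) * p' \<le> (u0 * Z - v0) * p'" using assms by (intro mult_right_mono) auto
  have d: "0 \<le> v * q'" using assms by simp
  show ?thesis using a b c d assms(6) by (simp add: algebra_simps)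
qed

lemma coin_mono_src:
  fixes u v u0 v0 p p' :: int
  assumes "u < u0" "0 \<le> v" "0 \<le> p'" "0 \<le> p" "v0 * p' \<le> p"
  shows "u * p - v * p' \<le> u0 * p - v0 * p'"
proof -
  have "u * p \<le> (u0 - 1) * p" using assms by (intro mult_right_mono) auto
  moreover have "0 \<le> v * p'" using assms by simp
  ultimately show ?thesis using assms(5) by (simp add: algebra_simps)
qed

section \<open>The run of the machine\<close>

locale halting_run =
  fixes \<delta> :: "'q \<Rightarrow> 'g \<Rightarrow> 'q \<times> 'g \<times> dir"
    and q0 qacc qrej :: 'q and blank dollar :: 'g and x :: "'g list" and T :: nat
  assumes left_end: "\<forall>q. q \<notin> {qacc, qrej} \<longrightarrow> (\<exists>q'. \<delta> q dollar = (q', dollar, R))"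
    and T_ge: "T \<ge> 3"
    and halts: "\<exists>t < T. fst (tm_run \<delta> {qacc, qrej} (init_config q0 dollar blank x) t) \<in> {qacc, qrej}"
    and halt_shape: "\<forall>t. (case tm_run \<delta> {qacc, qrej} (init_config q0 dollar blank x) t of (q, h, a) \<Rightarrow>
                         q \<in> {qacc, qrej} \<longrightarrow> h = 2 \<and> a 2 = blank \<and> a 3 = blank)"
begin

abbreviation "halting \<equiv> {qacc, qrej}"
definition run :: "nat \<Rightarrow> ('q, 'g) config" where
  "run t = tm_run \<delta> halting (init_config q0 dollar blank x) t"

definition state :: "nat \<Rightarrow> 'q" where "state t = fst (run t)"
definition head :: "nat \<Rightarrow> nat" where "head t = fst (snd (run t))"
definition tape :: "nat \<Rightarrow> nat \<Rightarrow> 'g" where "tape t = snd (snd (run t))"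

lemma run_eq: "run t = (state t, head t, tape t)"
  by (simp add: state_def head_def tape_def)

lemma run_Suc: "run (Suc t) = tm_step \<delta> halting (run t)"
  by (simp add: run_def tm_run_def)

lemma run_0: "run 0 = init_config q0 dollar blank x"
  by (simp add: run_def tm_run_def)

lemma run_Suc_halted: "state t \<in> halting \<Longrightarrow> run (Suc t) = run t"
  using run_eq[of t] by (simp add: run_Suc tm_step_def)

lemma run_add_halted: "state t \<in> halting \<Longrightarrow> run (t + n) = run t"
  by (induction n) (auto simp: state_def run_Suc_halted)

lemma halted_shape: "state t \<in> halting \<Longrightarrow> head t = 2 \<and> tape t 2 = blank \<and> tape t 3 = blank"
  using halt_shape[rule_format, of t] run_eq[of t] unfolding run_def[symmetric] by auto

lemma run_Suc_running:
  assumes "state t \<notin> halting" "\<delta> (state t) (tape t (head t)) = (q', a', d)"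
  shows "state (Suc t) = q' \<and> head (Suc t) = (if d = L then head t - 1 else head t + 1)
       \<and> tape (Suc t) = (tape t)(head t := a')"
  using assms run_eq[of t] run_eq[of "Suc t"] by (simp add: run_Suc tm_step_def)

lemma endmarker_head_bounds: "tape t 1 = dollar \<and> 1 \<le> head t \<and> head t \<le> t + 1"
proof (induction t)
  case 0
  then show ?case by (simp add: run_0 init_config_def tape_def head_def)
next
  case (Suc t)
  show ?case
  proof (cases "state t \<in> halting")
    case True
    then show ?thesis using Suc run_Suc_halted[of t] run_eq[of t] run_eq[of "Suc t"] by auto
  next
    case False
    obtain q' a' d where dd: "\<delta> (state t) (tape t (head t)) = (q', a', d)" by (metis prod_cases3)
    note ns = run_Suc_running[OF False dd]
    show ?thesis
    proof (cases "head t = 1")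
      case True
      from left_end False obtain q'' where "\<delta> (state t) dollar = (q'', dollar, R)" by auto
      with dd True Suc have "a' = dollar" "d = R" by auto
      then show ?thesis using ns True by auto
    next
      case False
      then show ?thesis using ns Suc by auto
    qed
  qed
qed

lemma obtain_halting_time: obtains th where "th < T" "state th \<in> halting"
  using halts unfolding run_def[symmetric] state_def[symmetric] by auto

lemma run_halted_after: assumes "th \<le> t" "state th \<in> halting" shows "run t = run th"
  using run_add_halted[OF assms(2), of "t - th"] assms(1) by simp

lemma head_bounds: "1 \<le> head t" "head t < T"
proof -
  obtain th where th: "th < T" "state th \<in> halting" by (rule obtain_halting_time)
  have "1 \<le> head t \<and> head t < T"
  proof (cases "th \<le> t")
    case True
    then have "head t = head th" using run_halted_after[OF True th(2)] by (simp add: head_def)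
    then show ?thesis using halted_shape[OF th(2)] T_ge by simp
  next
    case False
    then show ?thesis using endmarker_head_bounds[of t] th by auto
  qed
  then show "1 \<le> head t" "head t < T" by auto
qed

lemma last_row_halted: "state (T - 1) \<in> halting"
proof -
  obtain th where th: "th < T" "state th \<in> halting" by (rule obtain_halting_time)
  then have "run (T - 1) = run th" by (intro run_halted_after) auto
  then show ?thesis using th by (simp add: state_def)
qed

lemma accepts_iff_last_state: "(\<exists>t. state t = qacc) \<longleftrightarrow> state (T - 1) = qacc"
proof
  assume "\<exists>t. state t = qacc"
  then obtain t where t: "state t = qacc" by blast
  obtain th where th: "th < T" "state th \<in> halting" by (rule obtain_halting_time)
  show "state (T - 1) = qacc"
  proof (cases "t \<le> T - 1")
    case True
    then have "run (T - 1) = run t" using t by (intro run_halted_after) auto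
    then show ?thesis using t by (simp add: state_def)
  next
    case False
    then have "run t = run th" "run (T - 1) = run th" using th by (auto intro: run_halted_after)
    then show ?thesis using t by (simp add: state_def)
  qed
qed auto

end

section \<open>The tableau of the run\<close>

locale tableau = halting_run \<delta> q0 qacc qrej blank dollar x T
  for \<delta> :: "'q::finite \<Rightarrow> 'g::finite \<Rightarrow> 'q \<times> 'g \<times> dir"
    and q0 qacc qrej :: 'q and blank dollar :: 'g and x :: "'g list" and T :: nat +
  fixes f :: "'q \<Rightarrow> nat" and g :: "'g \<Rightarrow> nat" and B :: nat
  assumes f_bij: "bij_betw f UNIV {1..CARD('q)}"
    and g_bij: "bij_betw g UNIV {1..CARD('g)}"
    and B_ge: "B \<ge> (CARD('q) + 1) * CARD('g) + 2"
begin

abbreviation "b \<equiv> int B"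
abbreviation "Z \<equiv> b ^ T"

lemma g_range: "1 \<le> g a \<and> g a \<le> CARD('g)" using bij_betw_apply[OF g_bij, of a] by auto
lemma f_range: "1 \<le> f q \<and> f q \<le> CARD('q)" using bij_betw_apply[OF f_bij, of q] by auto
lemma g_inj: "g a = g a' \<Longrightarrow> a = a'" using bij_betw_imp_inj_on[OF g_bij] by (auto dest: injD)
lemma f_inj: "f q = f q' \<Longrightarrow> q = q'" using bij_betw_imp_inj_on[OF f_bij] by (auto dest: injD)

lemma card_symbols_le: "int CARD('g) \<le> b - 2"
proof -
  have "1 * CARD('g) \<le> (CARD('q) + 1) * CARD('g)" by (intro mult_right_mono) auto
  then show ?thesis using B_ge by linarith
qed

lemma b_gt_1: "1 < b"
  using B_ge by simp

abbreviation "pc q a \<equiv> pcode f g CARD('g) q a"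

lemma pc_range: "int CARD('g) + 1 \<le> pc q a \<and> pc q a \<le> b - 2"
proof -
  have "1 * CARD('g) \<le> f q * CARD('g)" using f_range[of q] by (intro mult_right_mono) auto
  moreover have "f q * CARD('g) \<le> CARD('q) * CARD('g)"
    using f_range[of q] by (intro mult_right_mono) auto
  moreover have "(CARD('q)+1)*CARD('g) = CARD('q)*CARD('g) + CARD('g)" by simp
  ultimately have n: "CARD('g) + 1 \<le> f q * CARD('g) + g a" "f q * CARD('g) + g a + 2 \<le> B"
    using g_range[of a] B_ge by linarith+
  then have "int (CARD('g) + 1) \<le> int (f q * CARD('g) + g a)" "int (f q * CARD('g) + g a + 2) \<le> int B"
    by (simp_all only: of_nat_le_iff)
  then show ?thesis by (simp add: pcode_def)
qed

lemma pc_inj: assumes "pc q a = pc q' a'" shows "q = q' \<and> a = a'"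
proof -
  have "int (f q * CARD('g) + g a) = int (f q' * CARD('g) + g a')"
    using assms by (simp only: pcode_def)
  then have e: "f q * CARD('g) + g a = f q' * CARD('g) + g a'" by (simp only: of_nat_eq_iff)
  have "f q = f q'"
  proof (rule ccontr)
    assume "f q \<noteq> f q'"
    then consider "f q + 1 \<le> f q'" | "f q' + 1 \<le> f q" by linarith
    then show False
    proof cases
      case 1
      then have "(f q + 1) * CARD('g) \<le> f q' * CARD('g)" by (intro mult_right_mono) auto
      then show False using e g_range[of a] g_range[of a'] by (simp add: algebra_simps)
    next
      case 2
      then have "(f q' + 1) * CARD('g) \<le> f q * CARD('g)" by (intro mult_right_mono) auto
      then show False using e g_range[of a] g_range[of a'] by (simp add: algebra_simps)
    qed
  qed
  then show ?thesis using e f_inj g_inj by auto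
qed

definition cell :: "nat \<Rightarrow> nat \<Rightarrow> int" where
  "cell t i = (if i = head t then pc (state t) (tape t i) else int (g (tape t i)))"

lemma cell_range: "1 \<le> cell t i \<and> cell t i \<le> b - 2"
  using pc_range[of "state t" "tape t i"] g_range[of "tape t i"] card_symbols_le
    by (auto simp: cell_def)

lemma cell_off_head: "i \<noteq> head t \<Longrightarrow> cell t i = int (g (tape t i))"
  by (simp add: cell_def)

lemma cell_head: "cell t (head t) = pc (state t) (tape t (head t))"
  by (simp add: cell_def)

text \<open>Row \<open>t\<close> of the tableau holds the configuration after \<open>t\<close> steps (the paper's \<open>C_(t+1)\<close>)
  and has weight \<open>B^((T - 1 - t) T)\<close>; the nonexistent row \<open>T\<close> has weight \<open>0\<close>, matching the
  convention \<open>B^((-1) T) = 0\<close>.\<close>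

definition scale :: "nat \<Rightarrow> int" where
  "scale t = (if t < T then b ^ ((T - 1 - t) * T) else 0)"

lemma scale_pos: "t < T \<Longrightarrow> 0 < scale t" using b_gt_1 by (simp add: scale_def)
lemma scale_nonneg: "0 \<le> scale t" using b_gt_1 by (simp add: scale_def)
lemma scale_last: "scale (T - 1) = 1" using T_ge by (simp add: scale_def)
lemma scale_T: "scale T = 0" by (simp add: scale_def)

lemma scale_Suc: assumes "Suc t < T" shows "scale t = Z * scale (Suc t)"
proof -
  have "T - 1 - t = Suc (T - 1 - Suc t)" using assms by arith
  then have "(T - 1 - t) * T = T + (T - 1 - Suc t) * T" by simp
  then show ?thesis using assms by (simp add: scale_def power_add)
qed

lemma scale_antimono: assumes "t' \<le> t" shows "scale t \<le> scale t'"
proof (cases "t < T")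
  case True
  then have "b ^ ((T - 1 - t) * T) \<le> b ^ ((T - 1 - t') * T)"
    using assms b_gt_1 by (intro power_increasing) (auto intro: mult_right_mono)
  then show ?thesis using True assms by (simp add: scale_def)
next
  case False
  then show ?thesis using scale_nonneg by (simp add: scale_def)
qed

lemma scale_cases:
  assumes "t < T" shows "consecutive_scales Z (scale t) (scale (Suc t))"
proof (cases "Suc t < T")
  case True
  then show ?thesis using scale_Suc scale_pos unfolding consecutive_scales_def by auto
next
  case False
  then have "t = T - 1" "Suc t = T" using assms by auto
  then show ?thesis using scale_last scale_T unfolding consecutive_scales_def by auto
qed

abbreviation "row_from t m \<equiv> digits_from b T (cell t) m"
abbreviation "row_before t m \<equiv> digits_before b T (cell t) m"

text \<open>The remainder once the greedy algorithm has copied the cells before \<open>m\<close> of row \<open>t\<close> into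
  row \<open>t + 1\<close>.\<close>

definition rest :: "nat \<Rightarrow> nat \<Rightarrow> int" where
  "rest t m = row_from t m * scale t + row_before (Suc t) m * scale (Suc t)"

lemma cell_le: "0 \<le> cell t i \<and> cell t i \<le> b - 2" using cell_range[of t i] by linarith

lemma cell_less: "cell t i < b" and cell_nonneg: "0 \<le> cell t i"
  using cell_range[of t i] by linarith+

lemma row_from_bounds: "m \<le> Suc T \<Longrightarrow> 0 \<le> row_from t m \<and> row_from t m < b ^ (Suc T - m)"
  by (rule digits_from_bounds) (use b_gt_1 in \<open>auto simp: cell_less cell_nonneg less_imp_le\<close>)

lemma row_from_le: "1 \<le> m \<Longrightarrow> m \<le> T \<Longrightarrow> row_from t m \<le> b ^ (Suc T - m) - 2"
  by (rule digits_from_le) (use b_gt_1 cell_le in auto)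

lemma row_before_bounds: "1 \<le> m \<Longrightarrow> m \<le> Suc T \<Longrightarrow> 0 \<le> row_before t m \<and> row_before t m \<le> Z - b ^ (Suc T - m)"
  by (rule digits_before_bounds) (use b_gt_1 in \<open>auto simp: cell_less cell_nonneg less_imp_le\<close>)

lemma bpow_of_nat: "bpow B (int n) = b ^ n" by (simp add: bpow_def)

lemma bpow_scale_upper:
  assumes "t < T" shows "bpow B ((int T - int (Suc t)) * int T) = scale t"
proof -
  have "(int T - int (Suc t)) * int T = int ((T - 1 - t) * T)"
    using assms by (simp add: of_nat_diff)
  then show ?thesis using assms by (simp only: bpow_of_nat scale_def if_True)
qed

lemma bpow_scale_lower:
  assumes "t < T" shows "bpow B ((int T - int (Suc t) - 1) * int T) = scale (Suc t)"
proof (cases "Suc t < T")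
  case True
  then have "(int T - int (Suc t) - 1) * int T = int ((T - 1 - Suc t) * T)"
    by (simp add: of_nat_diff)
  then show ?thesis using True by (simp only: bpow_of_nat scale_def if_True)
next
  case False
  then have "Suc t = T" using assms by simp
  then show ?thesis using T_ge by (simp add: bpow_def scale_def)
qed

lemma bpow_digit: "i \<le> T \<Longrightarrow> bpow B (int T - int i) = b ^ (T - i)"
  by (simp add: bpow_def nat_diff_distrib)

section \<open>Coins as moves of windows between rows\<close>

text \<open>The paper's source window \<open>u\<close> and target window \<open>v\<close> of the copy, transition and
  left-end coins at column \<open>i\<close>, with the row weights factored out.\<close>

definition copy_src :: "'g \<Rightarrow> nat \<Rightarrow> int" where
  "copy_src a i = int (g a) * b ^ (T - i)"

definition trans_src :: "'q \<Rightarrow> 'g \<Rightarrow> 'g \<Rightarrow> 'g \<Rightarrow> nat \<Rightarrow> int" where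
  "trans_src q am a ap i =
    int (g am) * b ^ Suc (Suc (T - i - 1)) + pc q a * b ^ Suc (T - i - 1) + int (g ap) * b ^ (T - i - 1)"

definition trans_dst :: "'q \<Rightarrow> 'g \<Rightarrow> 'g \<Rightarrow> 'g \<Rightarrow> nat \<Rightarrow> int" where
  "trans_dst q am a ap i = (if q \<in> halting then trans_src q am a ap i else (case \<delta> q a of
      (q', a', L) \<Rightarrow>
        pc q' am * b ^ Suc (Suc (T - i - 1)) + int (g a') * b ^ Suc (T - i - 1) + int (g ap) * b ^ (T - i - 1)
    | (q', a', R) \<Rightarrow>
        int (g am) * b ^ Suc (Suc (T - i - 1)) + int (g a') * b ^ Suc (T - i - 1) + pc q' ap * b ^ (T - i - 1)))"

definition left_src :: "'q \<Rightarrow> 'g \<Rightarrow> int" where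
  "left_src q ap = pc q dollar * b ^ Suc (T - 2) + int (g ap) * b ^ (T - 2)"

definition left_dst :: "'q \<Rightarrow> 'g \<Rightarrow> int" where
  "left_dst q ap = int (g dollar) * b ^ Suc (T - 2) + pc (fst (\<delta> q dollar)) ap * b ^ (T - 2)"

definition step_coin :: "int \<Rightarrow> int \<Rightarrow> nat \<Rightarrow> int" where
  "step_coin u v t = u * scale t - v * scale (Suc t)"

lemma copy_coin_eq:
  assumes "1 \<le> i" "i \<le> T" "t < T"
  shows "copy_coin g B T a i (Suc t) = step_coin (copy_src a i) (copy_src a i) t"
  unfolding copy_coin_def step_coin_def bpow_scale_upper[OF assms(3)] bpow_scale_lower[OF assms(3)]
    bpow_digit[OF assms(2)] copy_src_def
  by (simp add: algebra_simps)

lemma trans_coin_eq: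
  assumes "2 \<le> i" "i \<le> T - 1" "t < T"
  shows "trans_coin \<delta> halting f g CARD('g) B T q am a ap i (Suc t)
    = step_coin (trans_src q am a ap i) (trans_dst q am a ap i) t"
proof -
  have "int T - int i + 1 = int (Suc (Suc (T - i - 1)))" using assms by linarith
  then have e1: "bpow B (int T - int i + 1) = b ^ (Suc (Suc (T - i - 1)))"
    by (simp only: bpow_of_nat)
  have e2: "bpow B (int T - int i) = b ^ (Suc (T - i - 1))"
    using assms by (subst bpow_digit) (auto simp: Suc_diff_Suc)
  have e3: "bpow B (int T - int i - 1) = b ^ (T - i - 1)"
    using assms by (simp add: bpow_def nat_diff_distrib)
  show ?thesis
    unfolding trans_coin_def Let_def trans_dst_def trans_src_def step_coin_def e1 e2 e3
      bpow_scale_upper[OF assms(3)] bpow_scale_lower[OF assms(3)]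
    by (auto split: prod.splits dir.splits)
qed

lemma leftend_coin_eq:
  assumes "t < T"
  shows "leftend_coin \<delta> f g CARD('g) B T dollar q ap (Suc t) = step_coin (left_src q ap) (left_dst q ap) t"
proof -
  have "int T - 1 = int (Suc (T - 2))" using T_ge by linarith
  then have e1: "bpow B (int T - 1) = b ^ (Suc (T - 2))" by (simp only: bpow_of_nat)
  have e2: "bpow B (int T - 2) = b ^ (T - 2)" using T_ge by (simp add: bpow_def nat_diff_distrib)
  show ?thesis
    unfolding leftend_coin_def Let_def e1 e2 left_src_def left_dst_def step_coin_def
      bpow_scale_upper[OF assms] bpow_scale_lower[OF assms]
    by simp
qed

abbreviation "Coins \<equiv> coin_set \<delta> halting f g CARD('g) B T dollar"

lemma copy_coin_mem:
  assumes "1 \<le> i" "i \<le> T" "t < T"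
  shows "step_coin (copy_src a i) (copy_src a i) t \<in> Coins"
proof -
  have "copy_coin g B T a i (Suc t) \<in> Coins" unfolding coin_set_def
    by (rule UnI1, rule UnI1, rule CollectI, rule exI[of _ a], rule exI[of _ i], rule exI[of _ "Suc t"])
      (use assms in simp)
  then show ?thesis using copy_coin_eq[OF assms] by simp
qed

lemma trans_coin_mem:
  assumes "2 \<le> i" "i \<le> T - 1" "t < T"
  shows "step_coin (trans_src q am a ap i) (trans_dst q am a ap i) t \<in> Coins"
proof -
  have "trans_coin \<delta> halting f g CARD('g) B T q am a ap i (Suc t) \<in> Coins" unfolding coin_set_def
    by (rule UnI1, rule UnI2, rule CollectI, rule exI[of _ q], rule exI[of _ am], rule exI[of _ a],
      rule exI[of _ ap], rule exI[of _ i], rule exI[of _ "Suc t"]) (use assms in simp)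
  then show ?thesis using trans_coin_eq[OF assms] by simp
qed

lemma leftend_coin_mem:
  assumes "q \<notin> halting" "t < T"
  shows "step_coin (left_src q ap) (left_dst q ap) t \<in> Coins"
proof -
  have "leftend_coin \<delta> f g CARD('g) B T dollar q ap (Suc t) \<in> Coins" unfolding coin_set_def
    by (rule UnI2, rule CollectI, rule exI[of _ q], rule exI[of _ ap], rule exI[of _ "Suc t"])
      (use assms in simp)
  then show ?thesis using leftend_coin_eq[OF assms(2)] by simp
qed

lemma coin_set_cases:
  assumes "c \<in> Coins"
  obtains (copy) a i t where "1 \<le> i" "i \<le> T" "t < T" "c = step_coin (copy_src a i) (copy_src a i) t"
  | (trans) q am a ap i t where "2 \<le> i" "i \<le> T - 1" "t < T"
      "c = step_coin (trans_src q am a ap i) (trans_dst q am a ap i) t"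
  | (leftend) q ap t where "q \<notin> halting" "t < T" "c = step_coin (left_src q ap) (left_dst q ap) t"
proof -
  have j: "\<exists>t. j = Suc t \<and> t < T" if "1 \<le> j" "j \<le> T" for j
    using that by (intro exI[of _ "j - 1"]) auto
  from assms consider
    a i j where "1 \<le> i" "i \<le> T" "1 \<le> j" "j \<le> T" "c = copy_coin g B T a i j"
  | q am a ap i j where "2 \<le> i" "i \<le> T - 1" "1 \<le> j" "j \<le> T"
      "c = trans_coin \<delta> halting f g CARD('g) B T q am a ap i j"
  | q ap j where "q \<notin> halting" "1 \<le> j" "j \<le> T" "c = leftend_coin \<delta> f g CARD('g) B T dollar q ap j"
    unfolding coin_set_def by (elim UnE CollectE exE conjE) blast+
  then show ?thesis
  proof cases
    case 1
    then obtain t where "j = Suc t" "t < T" using j by blast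
    then show ?thesis using copy[OF 1(1,2) \<open>t < T\<close>] copy_coin_eq[OF 1(1,2) \<open>t < T\<close>] 1(5) by simp
  next
    case 2
    then obtain t where "j = Suc t" "t < T" using j by blast
    then show ?thesis using trans[OF 2(1,2) \<open>t < T\<close>] trans_coin_eq[OF 2(1,2) \<open>t < T\<close>] 2(5) by simp
  next
    case 3
    then obtain t where "j = Suc t" "t < T" using j by blast
    then show ?thesis using leftend[OF 3(1) \<open>t < T\<close>] leftend_coin_eq[OF \<open>t < T\<close>] 3(4) by simp
  qed
qed

lemma finite_coin_set: "finite Coins"
proof -
  have "finite {copy_coin g B T a i j |a i j. 1 \<le> i \<and> i \<le> T \<and> 1 \<le> j \<and> j \<le> T}"
  proof (rule finite_subset)
    show "{copy_coin g B T a i j |a i j. 1 \<le> i \<and> i \<le> T \<and> 1 \<le> j \<and> j \<le> T}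
      \<subseteq> (\<lambda>(a, i, j). copy_coin g B T a i j) ` (UNIV \<times> {..T} \<times> {..T})"
      by (force intro: image_eqI[where x="(_, _, _)"])
  qed simp
  moreover have "finite {trans_coin \<delta> halting f g CARD('g) B T q am a ap i j |q am a ap i j.
      2 \<le> i \<and> i \<le> T - 1 \<and> 1 \<le> j \<and> j \<le> T}"
  proof (rule finite_subset)
    show "{trans_coin \<delta> halting f g CARD('g) B T q am a ap i j |q am a ap i j.
        2 \<le> i \<and> i \<le> T - 1 \<and> 1 \<le> j \<and> j \<le> T}
      \<subseteq> (\<lambda>(q, am, a, ap, i, j). trans_coin \<delta> halting f g CARD('g) B T q am a ap i j)
          ` (UNIV \<times> UNIV \<times> UNIV \<times> UNIV \<times> {..T} \<times> {..T})"
      by (force intro: image_eqI[where x="(_, _, _, _, _, _)"])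
  qed simp
  moreover have "finite {leftend_coin \<delta> f g CARD('g) B T dollar q ap j |q ap j.
      q \<notin> halting \<and> 1 \<le> j \<and> j \<le> T}"
  proof (rule finite_subset)
    show "{leftend_coin \<delta> f g CARD('g) B T dollar q ap j |q ap j. q \<notin> halting \<and> 1 \<le> j \<and> j \<le> T}
      \<subseteq> (\<lambda>(q, ap, j). leftend_coin \<delta> f g CARD('g) B T dollar q ap j) ` (UNIV \<times> UNIV \<times> {..T})"
      by (force intro: image_eqI[where x="(_, _, _)"])
  qed simp
  ultimately show ?thesis unfolding coin_set_def by (intro finite_UnI)
qed

lemma g_bounds: "int (g a) \<le> b - 1" "0 \<le> int (g a)" using g_range[of a] card_symbols_le by auto
lemma pc_bounds: "pc q a \<le> b - 1" "0 \<le> pc q a" using pc_range[of q a] by auto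

lemma pow_le_Z: "b ^ n \<le> Z" if "n \<le> T" using that b_gt_1 by (intro power_increasing) auto

lemma pow_le_leading_digit:
  assumes "1 \<le> d" "0 \<le> r" shows "b ^ k \<le> d * b ^ k + r"
proof -
  have "1 * b ^ k \<le> d * b ^ k" using assms(1) b_gt_1 by (intro mult_right_mono) auto
  then show ?thesis using assms(2) by simp
qed

lemma copy_src_less: "copy_src a i < b ^ Suc (T - i)"
  using two_digits_less[of 0 b "int (g a)" "T - i"] g_bounds b_gt_1 by (simp add: copy_src_def)

lemma copy_src_ge: "b ^ (T - i) \<le> copy_src a i"
  using pow_le_leading_digit[of "int (g a)" 0] g_range[of a] by (simp add: copy_src_def)

lemma trans_src_bounds:
  "b ^ Suc (Suc (T - i - 1)) \<le> trans_src q am a ap i"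
  "trans_src q am a ap i < b ^ Suc (Suc (Suc (T - i - 1)))"
proof -
  define e where "e = T - i - 1"
  have "b ^ Suc (Suc e) \<le> int (g am) * b ^ Suc (Suc e) + (pc q a * b ^ Suc e + int (g ap) * b ^ e)"
    by (rule pow_le_leading_digit) (use g_range[of am] pc_bounds g_bounds b_gt_1 in auto)
  then show "b ^ Suc (Suc (T - i - 1)) \<le> trans_src q am a ap i"
    by (simp only: trans_src_def e_def[symmetric] add.assoc)
  show "trans_src q am a ap i < b ^ Suc (Suc (Suc (T - i - 1)))"
    unfolding trans_src_def e_def[symmetric]
    by (rule three_digits_less) (use g_bounds pc_bounds b_gt_1 in auto)
qed

lemma trans_dst_bounds:
  "0 \<le> trans_dst q am a ap i" "trans_dst q am a ap i < b ^ Suc (Suc (Suc (T - i - 1)))"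
proof -
  define e where "e = T - i - 1"
  have digits: "0 \<le> x * b ^ Suc (Suc e) + y * b ^ Suc e + z * b ^ e \<and>
      x * b ^ Suc (Suc e) + y * b ^ Suc e + z * b ^ e < b ^ Suc (Suc (Suc e))"
    if "0 \<le> x" "x \<le> b - 1" "0 \<le> y" "y \<le> b - 1" "0 \<le> z" "z \<le> b - 1" for x y z :: int
    using that three_digits_less[OF that] b_gt_1 by simp
  have "0 \<le> trans_dst q am a ap i \<and> trans_dst q am a ap i < b ^ Suc (Suc (Suc e))"
  proof (cases "q \<in> halting")
    case True
    have "0 \<le> b ^ Suc (Suc e)" using b_gt_1 by simp
    moreover have "trans_dst q am a ap i = trans_src q am a ap i"
      using True by (simp add: trans_dst_def)
    ultimately show ?thesis using trans_src_bounds[where q=q and am=am and a=a and ap=ap and i=i]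
      unfolding e_def by linarith
  next
    case False
    obtain q' a' d where dd: "\<delta> q a = (q', a', d)" by (metis prod_cases3)
    show ?thesis
    proof (cases d)
      case L
      then show ?thesis using False dd unfolding trans_dst_def e_def[symmetric]
        using digits[OF pc_bounds(2) pc_bounds(1) g_bounds(2) g_bounds(1) g_bounds(2) g_bounds(1),
            of q' am a' ap] by simp
    next
      case R
      then show ?thesis using False dd unfolding trans_dst_def e_def[symmetric]
        using digits[OF g_bounds(2) g_bounds(1) g_bounds(2) g_bounds(1) pc_bounds(2) pc_bounds(1),
            of am a' q' ap] by simp
    qed
  qed
  then show "0 \<le> trans_dst q am a ap i" "trans_dst q am a ap i < b ^ Suc (Suc (Suc (T - i - 1)))"
    unfolding e_def by auto
qed

lemma left_src_bounds:
  "b ^ Suc (T - 2) \<le> left_src q ap" "left_src q ap < b ^ Suc (Suc (T - 2))"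
proof -
  have "b ^ Suc (T - 2) \<le> pc q dollar * b ^ Suc (T - 2) + int (g ap) * b ^ (T - 2)"
    by (rule pow_le_leading_digit) (use pc_range[of q dollar] b_gt_1 in auto)
  then show "b ^ Suc (T - 2) \<le> left_src q ap" by (simp only: left_src_def)
  show "left_src q ap < b ^ Suc (Suc (T - 2))"
    unfolding left_src_def by (rule two_digits_less) (use g_bounds pc_bounds b_gt_1 in auto)
qed

lemma left_dst_bounds:
  "0 \<le> left_dst q ap" "left_dst q ap < b ^ Suc (Suc (T - 2))"
proof -
  have "0 \<le> int (g dollar) * b ^ Suc (T - 2)" "0 \<le> pc (fst (\<delta> q dollar)) ap * b ^ (T - 2)"
    using g_bounds pc_bounds b_gt_1 by simp_all
  then show "0 \<le> left_dst q ap" unfolding left_dst_def by linarith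
  show "left_dst q ap < b ^ Suc (Suc (T - 2))"
    unfolding left_dst_def by (rule two_digits_less) (use g_bounds pc_bounds b_gt_1 in auto)
qed

definition window :: "int \<Rightarrow> int \<Rightarrow> bool" where
  "window u v \<longleftrightarrow> (\<exists>n < T. b ^ n \<le> u \<and> u < b ^ Suc n \<and> 0 \<le> v \<and> v < b ^ Suc n \<and> (0 < n \<or> v \<le> u))"

lemma window_bounds:
  assumes "window u v"
  shows "1 \<le> u \<and> u \<le> Z - 1 \<and> 0 \<le> v \<and> v < Z \<and> Z - 1 \<le> u * Z - v \<and> (\<forall>e. u < b ^ e \<longrightarrow> v < b ^ e)"
proof -
  obtain n where n: "n < T" "b ^ n \<le> u" "u < b ^ Suc n" "0 \<le> v" "v < b ^ Suc n" "0 < n \<or> v \<le> u"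
    using assms unfolding window_def by blast
  have Z: "b ^ Suc n \<le> Z" using n(1) by (intro pow_le_Z) simp
  have u1: "1 \<le> u" using n(2) b_gt_1 by (smt (verit) one_le_power)
  have "Z - 1 \<le> u * Z - v" using n(6)
  proof
    assume "0 < n"
    then have "b ^ 1 \<le> b ^ n" using b_gt_1 by (intro power_increasing) auto
    then have "b \<le> u" using n(2) by (metis power_one_right order_trans)
    then have "2 * Z \<le> u * Z" using b_gt_1 by (intro mult_right_mono) auto
    then show ?thesis using n(5) Z by linarith
  next
    assume "v \<le> u"
    have "0 \<le> (u - 1) * (Z - 1)" using u1 Z n(3) by (intro mult_nonneg_nonneg) linarith+
    then show ?thesis using \<open>v \<le> u\<close> by (simp add: algebra_simps)
  qed
  moreover have "v < b ^ e" if "u < b ^ e" for e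
  proof -
    have "n < e" using n(2) that b_gt_1 power_less_imp_less_exp[of b n e] by linarith
    then show ?thesis using n(5) b_gt_1 power_increasing[of "Suc n" e b] by simp
  qed
  ultimately show ?thesis using u1 n Z by auto
qed

lemma window_copy: assumes "1 \<le> i" "i \<le> T" shows "window (copy_src a i) (copy_src a i)"
proof -
  have "0 < b ^ (T - i)" using b_gt_1 by simp
  then have "0 \<le> copy_src a i" using copy_src_ge[of i a] by linarith
  then show ?thesis unfolding window_def using assms copy_src_ge[of i a] copy_src_less[of a i]
    by (intro exI[of _ "T - i"]) auto
qed

lemma window_trans:
  assumes "2 \<le> i" "i \<le> T - 1" shows "window (trans_src q am a ap i) (trans_dst q am a ap i)"
  unfolding window_def using assms trans_src_bounds trans_dst_bounds
  by (intro exI[of _ "Suc (Suc (T - i - 1))"]) auto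

lemma window_leftend: "window (left_src q ap) (left_dst q ap)"
  unfolding window_def using T_ge left_src_bounds left_dst_bounds
  by (intro exI[of _ "Suc (T - 2)"]) auto

lemma cell_Suc_same_run: "run (Suc t) = run t \<Longrightarrow> cell (Suc t) i = cell t i"
  by (simp add: cell_def state_def head_def tape_def)

lemma cell_Suc_far:
  assumes "i \<noteq> head t" "Suc i \<noteq> head t" "i \<noteq> Suc (head t)"
  shows "cell (Suc t) i = cell t i"
proof (cases "state t \<in> halting")
  case True
  then show ?thesis using run_Suc_halted cell_Suc_same_run by blast
next
  case False
  obtain q' a' d where dd: "\<delta> (state t) (tape t (head t)) = (q', a', d)" by (metis prod_cases3)
  note ns = run_Suc_running[OF False dd]
  have "head (Suc t) \<noteq> i" using ns assms head_bounds(1)[of t] by (cases d) auto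
  moreover have "tape (Suc t) i = tape t i" using ns assms by simp
  ultimately show ?thesis using assms by (simp add: cell_def)
qed

abbreviation "trans_src_at t m \<equiv> trans_src (state t) (tape t m) (tape t (Suc m)) (tape t (Suc (Suc m))) (Suc m)"
abbreviation "trans_dst_at t m \<equiv> trans_dst (state t) (tape t m) (tape t (Suc m)) (tape t (Suc (Suc m))) (Suc m)"
abbreviation "left_src_at t \<equiv> left_src (state t) (tape t 2)"
abbreviation "left_dst_at t \<equiv> left_dst (state t) (tape t 2)"

lemma trans_src_dst_cells:
  assumes "head t = Suc m" "1 \<le> m"
  shows "trans_src_at t m = cell t m * b ^ Suc (Suc (T - Suc m - 1))
      + cell t (Suc m) * b ^ Suc (T - Suc m - 1) + cell t (Suc (Suc m)) * b ^ (T - Suc m - 1)"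
    and "trans_dst_at t m = cell (Suc t) m * b ^ Suc (Suc (T - Suc m - 1))
      + cell (Suc t) (Suc m) * b ^ Suc (T - Suc m - 1) + cell (Suc t) (Suc (Suc m)) * b ^ (T - Suc m - 1)"
proof -
  show src: "trans_src_at t m = cell t m * b ^ Suc (Suc (T - Suc m - 1))
      + cell t (Suc m) * b ^ Suc (T - Suc m - 1) + cell t (Suc (Suc m)) * b ^ (T - Suc m - 1)"
    using assms by (simp add: trans_src_def cell_def)
  show "trans_dst_at t m = cell (Suc t) m * b ^ Suc (Suc (T - Suc m - 1))
      + cell (Suc t) (Suc m) * b ^ Suc (T - Suc m - 1) + cell (Suc t) (Suc (Suc m)) * b ^ (T - Suc m - 1)"
  proof (cases "state t \<in> halting")
    case True
    then have "\<And>i. cell (Suc t) i = cell t i" using run_Suc_halted cell_Suc_same_run by blast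
    then show ?thesis using True src by (simp add: trans_dst_def)
  next
    case False
    obtain q' a' d where dd: "\<delta> (state t) (tape t (head t)) = (q', a', d)" by (metis prod_cases3)
    then show ?thesis using run_Suc_running[OF False dd] False assms
      by (cases d) (simp_all add: trans_dst_def cell_def)
  qed
qed

lemma leftend_src_dst_cells:
  assumes "head t = 1"
  shows "state t \<notin> halting"
    and "left_src_at t = cell t 1 * b ^ Suc (T - 2) + cell t 2 * b ^ (T - 2)"
    and "left_dst_at t = cell (Suc t) 1 * b ^ Suc (T - 2) + cell (Suc t) 2 * b ^ (T - 2)"
proof -
  show running: "state t \<notin> halting" using halted_shape[of t] assms by auto
  have endmarker: "tape t 1 = dollar" using endmarker_head_bounds[of t] by simp
  show "left_src_at t = cell t 1 * b ^ Suc (T - 2) + cell t 2 * b ^ (T - 2)"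
    using assms endmarker by (simp add: left_src_def cell_def)
  from left_end running obtain q' where dd: "\<delta> (state t) dollar = (q', dollar, R)" by auto
  then have "\<delta> (state t) (tape t (head t)) = (q', dollar, R)" using assms endmarker by simp
  then show "left_dst_at t = cell (Suc t) 1 * b ^ Suc (T - 2) + cell (Suc t) 2 * b ^ (T - 2)"
    using run_Suc_running[OF running] assms dd by (simp add: left_dst_def cell_def)
qed

lemma row_from_diff1: "m \<le> T \<Longrightarrow> row_from t m - row_from t (Suc m) = cell t m * b ^ (T - m)"
  using digits_from_Suc[of m T b "cell t"] by simp

lemma row_from_diff3:
  assumes "m + 2 \<le> T"
  shows "row_from t m - row_from t (m + 3)
    = cell t m * b ^ (T - m) + cell t (Suc m) * b ^ (T - Suc m) + cell t (Suc (Suc m)) * b ^ (T - Suc (Suc m))"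
  using digits_from_Suc[of m T b "cell t"] digits_from_Suc[of "Suc m" T b "cell t"]
    digits_from_Suc[of "Suc (Suc m)" T b "cell t"] assms
  by (simp add: numeral_3_eq_3)

lemma row_before_diff1: "1 \<le> m \<Longrightarrow> row_before t (Suc m) - row_before t m = cell t m * b ^ (T - m)"
  using digits_before_Suc[of m b T "cell t"] by simp

lemma row_before_diff3:
  assumes "1 \<le> m"
  shows "row_before t (m + 3) - row_before t m
    = cell t m * b ^ (T - m) + cell t (Suc m) * b ^ (T - Suc m) + cell t (Suc (Suc m)) * b ^ (T - Suc (Suc m))"
  using digits_before_Suc[of m b T "cell t"] digits_before_Suc[of "Suc m" b T "cell t"]
    digits_before_Suc[of "Suc (Suc m)" b T "cell t"] assms
  by (simp add: numeral_3_eq_3)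

section \<open>The coin taken from each window\<close>

text \<open>Row \<open>t\<close> is processed window by window; a window starts at cell \<open>m\<close>, ends before
  \<open>window_end t m\<close>, and is a single cell unless it is the head window of a transition or left-end
  coin.\<close>

definition window_start :: "nat \<Rightarrow> nat \<Rightarrow> bool" where
  "window_start t m \<longleftrightarrow> 1 \<le> m \<and> m \<le> Suc T \<and> m \<noteq> Suc (head t) \<and> (m = head t \<longrightarrow> head t = 1)"

definition window_end :: "nat \<Rightarrow> nat \<Rightarrow> nat" where
  "window_end t m = (if m = head t then m + 2 else if Suc m = head t then m + 3 else Suc m)"

definition win_src :: "nat \<Rightarrow> nat \<Rightarrow> int" where
  "win_src t m = row_from t m - row_from t (window_end t m)"

definition win_dst :: "nat \<Rightarrow> nat \<Rightarrow> int" where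
  "win_dst t m = row_before (Suc t) (window_end t m) - row_before (Suc t) m"

definition win_coin :: "nat \<Rightarrow> nat \<Rightarrow> int" where
  "win_coin t m = step_coin (win_src t m) (win_dst t m) t"

lemma window_start_1: "window_start t 1"
  using head_bounds[of t] by (simp add: window_start_def)

lemma window_start_end: "window_start t (Suc T)"
  using head_bounds[of t] by (simp add: window_start_def)

lemma window_copy_eq:
  assumes "window_start t m" "m \<le> T" "m \<noteq> head t" "Suc m \<noteq> head t"
  shows "window_end t m = Suc m \<and> win_src t m = copy_src (tape t m) m \<and> win_dst t m = copy_src (tape t m) m"
proof -
  have m: "1 \<le> m" using assms(1) by (simp add: window_start_def)
  have end_eq: "window_end t m = Suc m" using assms by (simp add: window_end_def)
  have "win_src t m = cell t m * b ^ (T - m)"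
    using end_eq row_from_diff1[OF assms(2)] by (simp add: win_src_def)
  moreover have "win_dst t m = cell (Suc t) m * b ^ (T - m)"
    using end_eq row_before_diff1[OF m, of "Suc t"] by (simp add: win_dst_def)
  moreover have "cell (Suc t) m = cell t m"
    using assms by (intro cell_Suc_far) (auto simp: window_start_def)
  ultimately show ?thesis using end_eq assms(3) by (simp add: copy_src_def cell_off_head)
qed

lemma window_trans_eq:
  assumes "window_start t m" "Suc m = head t"
  shows "window_end t m = m + 3 \<and> m + 2 \<le> T \<and> 2 \<le> Suc m \<and> Suc m \<le> T - 1
    \<and> win_src t m = trans_src_at t m \<and> win_dst t m = trans_dst_at t m"
proof -
  have m: "1 \<le> m" using assms by (simp add: window_start_def)
  have mT: "m + 2 \<le> T" "Suc m \<le> T - 1" using head_bounds(2)[of t] assms(2) by linarith+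
  have end_eq: "window_end t m = m + 3" using assms by (simp add: window_end_def)
  obtain e where e: "T - Suc m - 1 = e" by blast
  have exps: "T - m = Suc (Suc e)" "T - Suc m = Suc e" "T - Suc (Suc m) = e" using mT e by auto
  have "win_src t m = trans_src_at t m"
    using row_from_diff3[OF mT(1), of t] trans_src_dst_cells(1)[OF assms(2)[symmetric] m]
    unfolding win_src_def end_eq exps e by simp
  moreover have "win_dst t m = trans_dst_at t m"
    using row_before_diff3[OF m, of "Suc t"] trans_src_dst_cells(2)[OF assms(2)[symmetric] m]
    unfolding win_dst_def end_eq exps e by simp
  ultimately show ?thesis using end_eq mT m by simp
qed

lemma window_leftend_eq:
  assumes "window_start t m" "m = head t"
  shows "m = 1 \<and> head t = 1 \<and> window_end t m = 3 \<and> state t \<notin> halting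
    \<and> win_src t m = left_src_at t \<and> win_dst t m = left_dst_at t"
proof -
  have h: "head t = 1" "m = 1" using assms by (auto simp: window_start_def)
  have end_eq: "window_end t m = 3" using h by (simp add: window_end_def)
  have "T - 1 = Suc (T - 2)" using T_ge by simp
  then have "row_from t 1 - row_from t 3 = cell t 1 * b ^ Suc (T - 2) + cell t 2 * b ^ (T - 2)"
    "row_before (Suc t) 3 - row_before (Suc t) 1 = cell (Suc t) 1 * b ^ Suc (T - 2) + cell (Suc t) 2 * b ^ (T - 2)"
    using digits_from_Suc[of 1 T b "cell t"] digits_from_Suc[of 2 T b "cell t"]
      digits_before_Suc[of 1 b T "cell (Suc t)"] digits_before_Suc[of 2 b T "cell (Suc t)"] T_ge
    by (simp_all add: numeral_3_eq_3 numeral_2_eq_2)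
  then show ?thesis using h end_eq leftend_src_dst_cells[OF h(1)]
    by (simp add: win_src_def win_dst_def)
qed

lemma win_coin_mem:
  assumes "window_start t m" "m \<le> T" "t < T"
  shows "win_coin t m \<in> Coins \<and> window (win_src t m) (win_dst t m)"
proof -
  consider "m = head t" | "Suc m = head t" | "m \<noteq> head t" "Suc m \<noteq> head t" by blast
  then show ?thesis
  proof cases
    case 1
    then have "win_src t m = left_src_at t" "win_dst t m = left_dst_at t" "state t \<notin> halting"
      using window_leftend_eq[OF assms(1)] by auto
    then show ?thesis using leftend_coin_mem[OF _ assms(3)] window_leftend unfolding win_coin_def by simp
  next
    case 2
    then have "win_src t m = trans_src_at t m" "win_dst t m = trans_dst_at t m" "2 \<le> Suc m" "Suc m \<le> T - 1"
      using window_trans_eq[OF assms(1)] by auto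
    then show ?thesis using trans_coin_mem[OF _ _ assms(3)] window_trans unfolding win_coin_def by simp
  next
    case 3
    have "1 \<le> m" using assms(1) by (simp add: window_start_def)
    then show ?thesis using 3 window_copy_eq[OF assms(1,2)] copy_coin_mem window_copy assms(2,3)
      by (simp add: win_coin_def)
  qed
qed

lemma window_end_props:
  assumes "window_start t m" "m \<le> T"
  shows "window_start t (window_end t m)" "m < window_end t m"
proof -
  have h: "head t \<le> T - 1" "1 \<le> head t" using head_bounds[of t] by auto
  show "window_start t (window_end t m)"
    using assms h T_ge unfolding window_start_def window_end_def by auto
  show "m < window_end t m" unfolding window_end_def by auto
qed

lemma pow_mono: "n \<le> n' \<Longrightarrow> b ^ n \<le> b ^ n'"
  using b_gt_1 by (intro power_increasing) auto

lemma win_src_eq: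
  assumes "m \<le> T"
  shows "win_src t m = cell t m * b ^ (T - m) + (row_from t (Suc m) - row_from t (window_end t m))"
  unfolding win_src_def using digits_from_Suc[OF assms, of b "cell t"] by simp

lemma row_from_less: "m < n \<Longrightarrow> n \<le> Suc T \<Longrightarrow> row_from t n < row_from t m"
  by (rule digits_from_less)
    (use cell_range[of t] b_gt_1 in \<open>auto simp: less_le_trans[OF zero_less_one]\<close>)

lemma cell_le_win_src:
  assumes "window_start t m" "m \<le> T"
  shows "cell t m * b ^ (T - m) \<le> win_src t m"
proof (cases "window_end t m = Suc m")
  case False
  then have "Suc m < window_end t m" "window_end t m \<le> Suc T"
    using window_end_props[OF assms] by (auto simp: window_start_def)
  then show ?thesis using win_src_eq[OF assms(2)] row_from_less[of "Suc m" "window_end t m" t]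
    by simp
qed (simp add: win_src_eq[OF assms(2)])

lemma cell_less_win_src_near_head:
  assumes "window_start t m" "m \<le> T" "m = head t \<or> Suc m = head t"
  shows "cell t m * b ^ (T - m) < win_src t m"
proof -
  have "Suc m < window_end t m" "window_end t m \<le> Suc T"
    using assms window_end_props[OF assms(1,2)] by (auto simp: window_start_def window_end_def)
  then show ?thesis using win_src_eq[OF assms(2)] row_from_less[of "Suc m" "window_end t m" t]
    by simp
qed

lemma copy_src_le_row_cases:
  assumes "window_start t m" "m \<le> T" "1 \<le> i" "i \<le> T" "copy_src a i \<le> row_from t m"
  shows "copy_src a i < win_src t m \<or> m \<noteq> head t \<and> Suc m \<noteq> head t \<and> i = m \<and> a = tape t m"
proof -
  consider "i < m" | "i = m" | "m < i" by linarith
  then show ?thesis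
  proof cases
    case 1
    have "b ^ (Suc T - m) \<le> b ^ (T - i)" using 1 assms by (intro pow_mono) auto
    then show ?thesis using copy_src_ge[of i a] row_from_bounds[of m t] assms(2,5) by simp
  next
    case 2
    have "int (g a) \<le> cell t m"
    proof (rule mult_le_add_remainder_cancel)
      show "0 < b ^ (T - m)" using b_gt_1 by simp
      show "0 \<le> row_from t (Suc m)" "row_from t (Suc m) < b ^ (T - m)"
        using row_from_bounds[of "Suc m" t] assms(2) by auto
      show "b ^ (T - m) * int (g a) \<le> b ^ (T - m) * cell t m + row_from t (Suc m)"
        using assms(5) digits_from_Suc[OF assms(2), of b "cell t"] 2
          by (simp add: copy_src_def mult.commute)
    qed
    then have le: "copy_src a i \<le> cell t m * b ^ (T - m)"
      unfolding copy_src_def 2 using b_gt_1 by (intro mult_right_mono) auto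
    show ?thesis
    proof (cases "m = head t \<or> Suc m = head t")
      case True
      then show ?thesis using le cell_less_win_src_near_head[OF assms(1,2)]
        by (auto intro: le_less_trans)
    next
      case False
      then have cell: "cell t m = int (g (tape t m))" by (simp add: cell_off_head)
      show ?thesis
      proof (cases "a = tape t m")
        case False
        then have "int (g a) \<noteq> cell t m" using g_inj cell by auto
        then have "int (g a) + 1 \<le> cell t m" using \<open>int (g a) \<le> cell t m\<close> by simp
        then have "int (g a) * b ^ (T - m) < cell t m * b ^ (T - m)"
          using b_gt_1 by (intro mult_strict_right_mono) auto
        then show ?thesis using cell_le_win_src[OF assms(1,2)] 2 by (simp add: copy_src_def)
      qed (use False 2 in auto)
    qed
  next
    case 3
    have "b ^ Suc (T - i) \<le> b ^ (T - m)" using 3 assms by (intro pow_mono) auto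
    moreover have "b ^ (T - m) \<le> cell t m * b ^ (T - m)" using cell_range[of t m] b_gt_1 by simp
    ultimately show ?thesis using copy_src_less[of a i] cell_le_win_src[OF assms(1,2)] by linarith
  qed
qed

lemma trans_src_scaled:
  "trans_src q am a ap i = b ^ (T - i - 1) * ((int (g am) * b + pc q a) * b + int (g ap))"
  by (simp add: trans_src_def algebra_simps)

lemma left_src_scaled: "left_src q ap = b ^ (T - 2) * (pc q dollar * b + int (g ap))"
  by (simp add: left_src_def algebra_simps)

lemma row_from_scaled3:
  assumes "m + 2 \<le> T"
  shows "row_from t m = b ^ (T - Suc m - 1) * ((cell t m * b + cell t (Suc m)) * b + cell t (Suc (Suc m)))
    + row_from t (m + 3)"
proof -
  obtain e where e: "T - Suc m - 1 = e" by blast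
  then have "T - m = Suc (Suc e)" "T - Suc m = Suc e" "T - Suc (Suc m) = e" using assms by auto
  then show ?thesis using row_from_diff3[OF assms, of t] unfolding e by (simp add: algebra_simps)
qed

lemma row_from_scaled2: "row_from t 1 = b ^ (T - 2) * (cell t 1 * b + cell t 2) + row_from t 3"
proof -
  have "T - 1 = Suc (T - 2)" using T_ge by simp
  then show ?thesis
    using digits_from_Suc[of 1 T b "cell t"] digits_from_Suc[of 2 T b "cell t"] T_ge
    by (simp add: numeral_2_eq_2 numeral_3_eq_3 algebra_simps)
qed

lemma trans_src_le_row_digits:
  assumes "m + 2 \<le> T" "trans_src q am a ap (Suc m) \<le> row_from t m"
  shows "(int (g am) * b + pc q a) * b + int (g ap)
    \<le> (cell t m * b + cell t (Suc m)) * b + cell t (Suc (Suc m))"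
proof (rule mult_le_add_remainder_cancel)
  show "0 < b ^ (T - Suc m - 1)" using b_gt_1 by simp
  show "0 \<le> row_from t (m + 3)" "row_from t (m + 3) < b ^ (T - Suc m - 1)"
    using row_from_bounds[of "m + 3" t] assms(1) by (auto simp: numeral_3_eq_3)
  show "b ^ (T - Suc m - 1) * ((int (g am) * b + pc q a) * b + int (g ap))
    \<le> b ^ (T - Suc m - 1) * ((cell t m * b + cell t (Suc m)) * b + cell t (Suc (Suc m))) + row_from t (m + 3)"
    using assms(2) unfolding trans_src_scaled row_from_scaled3[OF assms(1)] .
qed

lemma trans_src_at_head_cases:
  assumes "window_start t m" "Suc m = head t" "trans_src q am a ap (Suc m) \<le> row_from t m"
  shows "trans_src q am a ap (Suc m) < win_src t m
    \<or> q = state t \<and> am = tape t m \<and> a = tape t (Suc m) \<and> ap = tape t (Suc (Suc m))"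
proof -
  note win = window_trans_eq[OF assms(1,2)]
  have cells: "cell t m = int (g (tape t m))" "cell t (Suc m) = pc (state t) (tape t (Suc m))"
    "cell t (Suc (Suc m)) = int (g (tape t (Suc (Suc m))))"
    using assms(2) cell_head[of t] by (auto simp: cell_off_head)
  define X where "X = (cell t m * b + cell t (Suc m)) * b + cell t (Suc (Suc m))"
  define X' where "X' = (int (g am) * b + pc q a) * b + int (g ap)"
  have "win_src t m = b ^ (T - Suc m - 1) * X"
    using win unfolding trans_src_scaled X_def cells by simp
  moreover have "trans_src q am a ap (Suc m) = b ^ (T - Suc m - 1) * X'"
    unfolding trans_src_scaled X'_def ..
  moreover have "X' \<le> X"
    using trans_src_le_row_digits[OF _ assms(3)] win unfolding X_def X'_def by simp
  moreover have "q = state t \<and> am = tape t m \<and> a = tape t (Suc m) \<and> ap = tape t (Suc (Suc m))" if "X' = X"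
  proof -
    have digits: "0 \<le> int (g ap)" "int (g ap) < b" "0 \<le> cell t (Suc (Suc m))" "cell t (Suc (Suc m)) < b"
      "0 \<le> pc q a" "pc q a < b" "0 \<le> cell t (Suc m)" "cell t (Suc m) < b"
      using g_bounds[of ap] pc_bounds[of q a] cell_range[of t "Suc m"] cell_range[of t "Suc (Suc m)"]
        by auto
    have "int (g ap) = cell t (Suc (Suc m)) \<and> pc q a = cell t (Suc m) \<and> int (g am) = cell t m"
      using base_digits3_eq[OF digits] that unfolding X'_def X_def by blast
    then show ?thesis unfolding cells by (auto dest: g_inj pc_inj)
  qed
  moreover have "b ^ (T - Suc m - 1) * X' < b ^ (T - Suc m - 1) * X" if "X' < X"
    using that b_gt_1 by simp
  ultimately show ?thesis by (cases "X' < X") auto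
qed

lemma trans_src_off_head_less:
  assumes "window_start t m" "m + 2 \<le> T" "Suc m \<noteq> head t" "trans_src q am a ap (Suc m) \<le> row_from t m"
  shows "trans_src q am a ap (Suc m) < win_src t m"
proof -
  have le: "(int (g am) * b + pc q a) * b + int (g ap)
      \<le> (cell t m * b + cell t (Suc m)) * b + cell t (Suc (Suc m))"
    using trans_src_le_row_digits[OF assms(2,4)] .
  have le2: "int (g am) * b + pc q a \<le> cell t m * b + cell t (Suc m)"
    by (rule base_digit_le_of_le[OF le]) (use cell_range[of t "Suc (Suc m)"] g_bounds b_gt_1 in auto)
  have "int (g am) < cell t m"
  proof (cases "m = head t")
    case True
    then show ?thesis using cell_head[of t] pc_range[of "state t" "tape t m"] g_range[of am] by simp
  next
    case False
    have "cell t (Suc m) < pc q a"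
      using assms(3) g_range[of "tape t (Suc m)"] pc_range[of q a] by (simp add: cell_off_head)
    moreover have "int (g am) \<le> cell t m"
      by (rule base_digit_le_of_le[OF le2]) (use cell_range[of t "Suc m"] pc_bounds b_gt_1 in auto)
    ultimately show ?thesis using le2 by (cases "int (g am) = cell t m") auto
  qed
  then have "(int (g am) + 1) * b * b \<le> cell t m * b * b"
    using b_gt_1 by (intro mult_right_mono) auto
  moreover have "pc q a * b + int (g ap) < b * b"
    using two_digits_less[of "pc q a" b "int (g ap)" 0] pc_bounds g_bounds b_gt_1 by simp
  ultimately have "(int (g am) * b + pc q a) * b + int (g ap) < cell t m * b * b"
    by (simp add: algebra_simps)
  then have "trans_src q am a ap (Suc m) < b ^ (T - Suc m - 1) * (cell t m * b * b)"
    unfolding trans_src_scaled using b_gt_1 by simp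
  also have "\<dots> = cell t m * b ^ (T - m)"
  proof -
    obtain e where e: "T - Suc m - 1 = e" by blast
    then have "T - m = Suc (Suc e)" using assms(2) by auto
    then show ?thesis unfolding e by (simp add: algebra_simps)
  qed
  also have "\<dots> \<le> win_src t m" using cell_le_win_src[OF assms(1)] assms(2) by simp
  finally show ?thesis .
qed

lemma trans_src_le_row_cases:
  assumes "window_start t m" "m \<le> T" "2 \<le> i" "i \<le> T - 1" "trans_src q am a ap i \<le> row_from t m"
  shows "trans_src q am a ap i < win_src t m
    \<or> Suc m = head t \<and> i = Suc m \<and> q = state t \<and> am = tape t m \<and> a = tape t (Suc m) \<and> ap = tape t (Suc (Suc m))"
proof -
  consider "i \<le> m" | "i = Suc m" | "Suc (Suc m) \<le> i" by linarith
  then show ?thesis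
  proof cases
    case 1
    have "b ^ (Suc T - m) \<le> b ^ Suc (Suc (T - i - 1))" using 1 assms by (intro pow_mono) auto
    then show ?thesis
      using trans_src_bounds(1)[of i q am a ap] row_from_bounds[of m t] assms(2,5) by simp
  next
    case 2
    have "m + 2 \<le> T" using 2 assms(4) by simp
    then show ?thesis
      using trans_src_at_head_cases[OF assms(1)] trans_src_off_head_less[OF assms(1)] assms(5) 2
      by (cases "Suc m = head t") auto
  next
    case 3
    have "b ^ Suc (Suc (Suc (T - i - 1))) \<le> b ^ (T - m)" using 3 assms by (intro pow_mono) auto
    moreover have "b ^ (T - m) \<le> cell t m * b ^ (T - m)" using cell_range[of t m] b_gt_1 by simp
    ultimately show ?thesis
      using trans_src_bounds(2)[of q am a ap i] cell_le_win_src[OF assms(1,2)] by linarith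
  qed
qed

lemma left_src_le_row_cases:
  assumes "window_start t m" "m \<le> T" "left_src q ap \<le> row_from t m"
  shows "left_src q ap < win_src t m \<or> m = head t \<and> q = state t \<and> ap = tape t 2"
proof (cases "m = 1")
  case False
  have "b ^ (Suc T - m) \<le> b ^ Suc (T - 2)"
    using False assms(1) T_ge by (intro pow_mono) (auto simp: window_start_def)
  then show ?thesis using left_src_bounds(1)[of q ap] row_from_bounds[of m t] assms(2,3) by simp
next
  case True
  define X where "X = cell t 1 * b + cell t 2"
  define X' where "X' = pc q dollar * b + int (g ap)"
  have "X' \<le> X" unfolding X_def X'_def
  proof (rule mult_le_add_remainder_cancel)
    show "0 < b ^ (T - 2)" using b_gt_1 by simp
    show "0 \<le> row_from t 3" "row_from t 3 < b ^ (T - 2)" using row_from_bounds[of 3 t] T_ge by auto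
    have "left_src q ap \<le> row_from t 1" using assms(3) True by simp
    then show "b ^ (T - 2) * (pc q dollar * b + int (g ap)) \<le> b ^ (T - 2) * (cell t 1 * b + cell t 2) + row_from t 3"
      unfolding left_src_scaled row_from_scaled2 .
  qed
  have lead: "pc q dollar \<le> cell t 1"
    by (rule base_digit_le_of_le[OF \<open>X' \<le> X\<close>[unfolded X_def X'_def]])
      (use cell_range[of t 2] g_bounds b_gt_1 in auto)
  have head: "head t = 1"
  proof (rule ccontr)
    assume "head t \<noteq> 1"
    then have "cell t 1 \<le> int CARD('g)" using g_range[of "tape t 1"] by (simp add: cell_off_head)
    then show False using lead pc_range[of q dollar] by simp
  qed
  have cells: "cell t 1 = pc (state t) dollar" "cell t 2 = int (g (tape t 2))"
    using head cell_head[of t] endmarker_head_bounds[of t] by (auto simp: cell_off_head)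
  have "win_src t m = b ^ (T - 2) * X"
    using window_leftend_eq[OF assms(1)] head True unfolding left_src_scaled X_def cells by simp
  moreover have "q = state t \<and> ap = tape t 2" if "X' = X"
  proof -
    have digits: "0 \<le> int (g ap)" "int (g ap) < b" "0 \<le> cell t 2" "cell t 2 < b"
      using g_bounds[of ap] cell_range[of t 2] by auto
    have "int (g ap) = cell t 2 \<and> pc q dollar = cell t 1"
      using base_digits2_eq[OF digits] that unfolding X'_def X_def by blast
    then show ?thesis unfolding cells by (auto dest: g_inj pc_inj)
  qed
  moreover have "b ^ (T - 2) * X' < b ^ (T - 2) * X" if "X' < X" using that b_gt_1 by simp
  ultimately show ?thesis using \<open>X' \<le> X\<close> head True unfolding left_src_scaled X'_def[symmetric]
    by (cases "X' < X") auto
qed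

lemma rest_digit_bounds:
  assumes "1 \<le> m" "m \<le> T"
  shows "0 \<le> row_from t m" "row_from t m + 2 \<le> b ^ (Suc T - m)"
    "0 \<le> row_before (Suc t) m" "row_before (Suc t) m + b ^ (Suc T - m) \<le> Z"
proof -
  show "0 \<le> row_from t m" using row_from_bounds[of m t] assms by simp
  show "row_from t m + 2 \<le> b ^ (Suc T - m)" using row_from_le[OF assms, of t] by simp
  show "0 \<le> row_before (Suc t) m" "row_before (Suc t) m + b ^ (Suc T - m) \<le> Z"
    using row_before_bounds[OF assms(1), of "Suc t"] assms by auto
qed

lemma coin_earlier_row_exceeds_rest:
  assumes "window u v" "t' < t" "t < T" "1 \<le> m" "m \<le> T"
  shows "\<not> step_coin u v t' \<le> rest t m"
  unfolding step_coin_def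
proof (rule coin_earlier_row_exceeds[where Z=Z and A="row_from t m"])
  note bounds = rest_digit_bounds[OF assms(4,5), where t=t]
  show "Z - 1 \<le> u * Z - v" using window_bounds[OF assms(1)] by auto
  have "b ^ (Suc T - m) \<le> Z" using assms by (intro pow_le_Z) simp
  then show "row_from t m \<le> Z - 2" "0 \<le> row_from t m" using bounds by linarith+
  show "0 \<le> scale t" by (rule scale_nonneg)
  show "scale t' = Z * scale (Suc t')" using scale_Suc assms(2,3) by simp
  show "scale t \<le> scale (Suc t')" using scale_antimono[of "Suc t'" t] assms(2) by simp
  show "rest t m < (row_from t m + 1) * scale t" unfolding rest_def
    by (rule two_row_value_less[OF scale_cases[OF assms(3)]]) (use bounds b_gt_1 in auto)
qed

lemma coin_same_row_src_le:
  assumes "window u v" "t < T" "1 \<le> m" "m \<le> T" "step_coin u v t \<le> rest t m"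
  shows "u \<le> row_from t m"
proof (rule src_le_of_coin_le_two_rows[OF scale_cases[OF assms(2)]])
  note bounds = rest_digit_bounds[OF assms(3,4), where t=t]
  show "0 \<le> v" "v < Z" using window_bounds[OF assms(1)] by auto
  show "u < b ^ (Suc T - m) \<Longrightarrow> v < b ^ (Suc T - m)" using window_bounds[OF assms(1)] by auto
  show "u * scale t - v * scale (Suc t) \<le> row_from t m * scale t + row_before (Suc t) m * scale (Suc t)"
    using assms(5) by (simp add: rest_def step_coin_def)
qed (use rest_digit_bounds[OF assms(3,4), where t=t] in auto)

lemma coin_later_row_le_win_coin:
  assumes "window u v" "t < t'" "t' < T" "window_start t m" "m \<le> T"
  shows "step_coin u v t' \<le> win_coin t m"
  unfolding win_coin_def step_coin_def
proof (rule coin_later_row_le[where Z=Z])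
  have "window (win_src t m) (win_dst t m)" using win_coin_mem assms by auto
  then show "Z - 1 \<le> win_src t m * Z - win_dst t m" by (auto dest: window_bounds)
  show "0 \<le> u" "u \<le> Z - 1" "0 \<le> v" using window_bounds[OF assms(1)] by auto
  show "scale t' \<le> scale (Suc t)" using scale_antimono assms(2) by simp
  show "scale t = Z * scale (Suc t)" using scale_Suc assms(2,3) by simp
qed (use scale_nonneg in auto)

lemma win_dst_scale:
  assumes "window_start t m" "m \<le> T" "t < T"
  shows "win_dst t m * scale (Suc t) \<le> scale t" "0 \<le> win_dst t m"
proof -
  have "window (win_src t m) (win_dst t m)" using win_coin_mem assms by blast
  then have v: "0 \<le> win_dst t m" "win_dst t m < Z" by (auto dest: window_bounds)
  then show "win_dst t m * scale (Suc t) \<le> scale t"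
    using consecutive_scales_lower_le[OF scale_cases[OF assms(3)]] by simp
  show "0 \<le> win_dst t m" using v by simp
qed

lemma coin_le_win_coin_of_src:
  assumes "window_start t m" "m \<le> T" "t < T" "window u v" "t' < T" "step_coin u v t' \<le> rest t m"
    and "u \<le> row_from t m \<Longrightarrow> u < win_src t m \<or> u = win_src t m \<and> v = win_dst t m"
  shows "step_coin u v t' \<le> win_coin t m"
proof -
  have m: "1 \<le> m" using assms(1) by (simp add: window_start_def)
  consider "t' < t" | "t' = t" | "t < t'" by linarith
  then show ?thesis
  proof cases
    case 1
    then show ?thesis using coin_earlier_row_exceeds_rest[OF assms(4) _ assms(3) m assms(2)] assms(6) by simp
  next
    case 2
    have "0 \<le> v" using window_bounds[OF assms(4)] by auto
    then have "step_coin u v t \<le> win_coin t m" if "u < win_src t m"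
      using that win_dst_scale[OF assms(1-3)] scale_nonneg unfolding win_coin_def step_coin_def
      by (intro coin_mono_src) auto
    then show ?thesis
      using 2 assms(7) coin_same_row_src_le[OF assms(4,3) m assms(2)] assms(6)
        by (auto simp: win_coin_def)
  next
    case 3
    then show ?thesis using coin_later_row_le_win_coin[OF assms(4) _ assms(5,1,2)] by simp
  qed
qed

lemma coin_le_win_coin:
  assumes "window_start t m" "m \<le> T" "t < T" "c \<in> Coins" "c \<le> rest t m"
  shows "c \<le> win_coin t m"
  using assms(4)
proof (cases rule: coin_set_cases)
  case (copy a i t')
  have "copy_src a i < win_src t m \<or> copy_src a i = win_src t m \<and> copy_src a i = win_dst t m"
    if "copy_src a i \<le> row_from t m"
    using copy_src_le_row_cases[OF assms(1,2) copy(1,2) that] window_copy_eq[OF assms(1,2)] by auto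
  then show ?thesis using copy coin_le_win_coin_of_src[OF assms(1-3) window_copy] assms(5) by simp
next
  case (trans q am a ap i t')
  have "trans_src q am a ap i < win_src t m
      \<or> trans_src q am a ap i = win_src t m \<and> trans_dst q am a ap i = win_dst t m"
    if "trans_src q am a ap i \<le> row_from t m"
    using trans_src_le_row_cases[OF assms(1,2) trans(1,2) that] window_trans_eq[OF assms(1)] by auto
  then show ?thesis using trans coin_le_win_coin_of_src[OF assms(1-3) window_trans] assms(5) by simp
next
  case (leftend q ap t')
  have "left_src q ap < win_src t m \<or> left_src q ap = win_src t m \<and> left_dst q ap = win_dst t m"
    if "left_src q ap \<le> row_from t m"
    using left_src_le_row_cases[OF assms(1,2) that] window_leftend_eq[OF assms(1)] by auto
  then show ?thesis using leftend coin_le_win_coin_of_src[OF assms(1-3) window_leftend] assms(5) by simp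
qed

lemma rest_win_coin: "rest t m - win_coin t m = rest t (window_end t m)"
  unfolding rest_def win_coin_def step_coin_def win_src_def win_dst_def by (simp add: algebra_simps)

lemma coin_pos: assumes "c \<in> Coins" shows "0 < c"
proof -
  have "2 \<le> Z"
  proof -
    have "b ^ 1 \<le> Z" using T_ge by (intro pow_le_Z) auto
    then show ?thesis using b_gt_1 by (simp only: power_one_right)
  qed
  then have pos: "0 < step_coin u v t'" if "window u v" "t' < T" for u v t'
    using that coin_value_pos[OF scale_cases[OF that(2)]] unfolding step_coin_def
      by (auto dest: window_bounds)
  from assms show ?thesis
  proof (cases rule: coin_set_cases)
    case (copy a i t)
    then show ?thesis using pos[OF window_copy] by simp
  next
    case (trans q am a ap i t)
    then show ?thesis using pos[OF window_trans] by simp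
  next
    case (leftend q ap t)
    then show ?thesis using pos[OF window_leftend] by simp
  qed
qed

section \<open>The greedy algorithm writes the tableau\<close>

abbreviation "W \<equiv>
  encode f g CARD('g) B T (init_config q0 dollar blank x) * bpow B ((int T - 1) * int T)"
abbreviation "rem \<tau> \<equiv> greedy_rem Coins W \<tau>"

lemma W_eq_rest: "W = rest 0 1"
proof -
  have "init_config q0 dollar blank x = (state 0, head 0, tape 0)" using run_0 run_eq[of 0] by simp
  then have "encode f g CARD('g) B T (init_config q0 dollar blank x)
      = (\<Sum>i = 1..T. (if i = head 0 then pc (state 0) (tape 0 i) else int (g (tape 0 i))) * bpow B (int T - int i))"
    by (simp add: encode_def)
  also have "\<dots> = (\<Sum>i = 1..T. cell 0 i * b ^ (T - i))"
    by (rule sum.cong) (auto simp: cell_def bpow_digit)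
  also have "\<dots> = row_from 0 1" by (simp add: digits_from_def)
  finally have e: "encode f g CARD('g) B T (init_config q0 dollar blank x) = row_from 0 1" .
  have "bpow B ((int T - int (Suc 0)) * int T) = scale 0"
    using T_ge by (intro bpow_scale_upper) auto
  then have q: "bpow B ((int T - 1) * int T) = scale 0" by simp
  show ?thesis unfolding e q rest_def by (simp add: digits_before_def)
qed

lemma greedy_step:
  assumes "window_start t m" "m \<le> T" "t < T" "rem \<tau> = rest t m"
  shows "(\<exists>c\<in>Coins. c \<le> rem \<tau>) \<and> Max {c \<in> Coins. c \<le> rem \<tau>} = win_coin t m
    \<and> rem (Suc \<tau>) = rest t (window_end t m)"
proof -
  have inC: "win_coin t m \<in> Coins" using win_coin_mem assms by blast
  have "0 \<le> rest t (window_end t m)"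
  proof -
    have v: "window_start t (window_end t m)" using window_end_props assms by blast
    then have "1 \<le> window_end t m" "window_end t m \<le> Suc T" by (auto simp: window_start_def)
    then have "0 \<le> row_from t (window_end t m)" "0 \<le> row_before (Suc t) (window_end t m)"
      using row_from_bounds row_before_bounds by auto
    then show ?thesis unfolding rest_def using scale_nonneg by simp
  qed
  then have le: "win_coin t m \<le> rest t m" using rest_win_coin[of t m] by simp
  have ex: "\<exists>c\<in>Coins. c \<le> rem \<tau>" using inC le assms(4) by (intro bexI[of _ "win_coin t m"]) auto
  have mx: "Max {c \<in> Coins. c \<le> rem \<tau>} = win_coin t m"
  proof (rule Max_eqI)
    show "finite {c \<in> Coins. c \<le> rem \<tau>}" using finite_coin_set by simp
    show "\<And>y. y \<in> {c \<in> Coins. c \<le> rem \<tau>} \<Longrightarrow> y \<le> win_coin t m"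
      using coin_le_win_coin assms by auto
    show "win_coin t m \<in> {c \<in> Coins. c \<le> rem \<tau>}" using inC le assms(4) by simp
  qed
  have "rem (Suc \<tau>) = rest t m - win_coin t m" using ex mx assms(4) by simp
  then show ?thesis using ex mx rest_win_coin by simp
qed

lemma rest_row_end: assumes "Suc t < T" shows "rest t (Suc T) = rest (Suc t) 1"
proof -
  have "row_before (Suc t) (Suc T) + row_from (Suc t) (Suc T) = row_from (Suc t) 1"
    by (rule digits_before_add_from) auto
  then show ?thesis unfolding rest_def by (simp add: digits_from_beyond digits_before_def)
qed

lemma rest_last: "rest (T - 1) (Suc T) = 0"
proof -
  have "Suc (T - 1) = T" using T_ge by simp
  then show ?thesis unfolding rest_def by (simp add: digits_from_beyond scale_T)
qed

lemma window_start_predecessor: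
  assumes "window_start t m" "m \<noteq> 1"
  obtains p where "window_start t p" "p < m" "p \<le> T" "window_end t p = m"
proof -
  have m: "2 \<le> m" "m \<le> Suc T" "m \<noteq> Suc (head t)" "m \<noteq> head t"
    using assms by (auto simp: window_start_def)
  note h = head_bounds[of t]
  consider "m = Suc (Suc (head t))" "head t = 1" | "m = Suc (Suc (head t))" "head t \<noteq> 1"
    | "m \<noteq> Suc (Suc (head t))" by blast
  then show ?thesis
  proof cases
    case 1
    then show ?thesis using that[of 1] h by (auto simp: window_start_def window_end_def)
  next
    case 2
    then have "window_start t (head t - 1)" "window_end t (head t - 1) = m"
      using h by (auto simp: window_start_def window_end_def)
    then show ?thesis using that[of "head t - 1"] 2 h by simp
  next
    case 3
    then have "window_start t (m - 1)" "window_end t (m - 1) = m"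
      using m by (auto simp: window_start_def window_end_def)
    then show ?thesis using that[of "m - 1"] m by simp
  qed
qed

lemma reach_rest_in_row:
  assumes "t < T" "\<exists>\<tau>. rem \<tau> = rest t 1"
  shows "window_start t m \<Longrightarrow> \<exists>\<tau>. rem \<tau> = rest t m"
proof (induction m rule: less_induct)
  case (less m)
  show ?case
  proof (cases "m = 1")
    case False
    then obtain p where p: "window_start t p" "p < m" "p \<le> T" "window_end t p = m"
      using window_start_predecessor[OF less.prems] by blast
    obtain \<tau> where "rem \<tau> = rest t p" using less.IH[OF p(2,1)] by blast
    then have "rem (Suc \<tau>) = rest t (window_end t p)" using greedy_step[OF p(1,3) assms(1)] by blast
    then show ?thesis unfolding p(4) by blast
  qed (use assms in simp)
qed

lemma reach_rest: "t < T \<Longrightarrow> window_start t m \<Longrightarrow> \<exists>\<tau>. rem \<tau> = rest t m"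
proof (induction t arbitrary: m)
  case 0
  have "rem 0 = rest 0 1" using W_eq_rest by simp
  then show ?case using reach_rest_in_row 0 by blast
next
  case (Suc t)
  have "\<exists>\<tau>. rem \<tau> = rest t (Suc T)" using Suc.IH[of "Suc T"] Suc.prems window_start_end by simp
  then have "\<exists>\<tau>. rem \<tau> = rest (Suc t) 1" using rest_row_end Suc.prems by simp
  then show ?case using reach_rest_in_row Suc.prems by blast
qed

lemma greedy_rem_cases:
  "rem \<tau> = 0 \<or> (\<exists>t m. t < T \<and> window_start t m \<and> m \<le> T \<and> rem \<tau> = rest t m)"
proof (induction \<tau>)
  case 0
  then show ?case using W_eq_rest window_start_1 T_ge by (intro disjI2 exI[of _ 0] exI[of _ 1]) auto
next
  case (Suc \<tau>)
  then show ?case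
  proof
    assume z: "rem \<tau> = 0"
    have "\<not> (\<exists>c\<in>Coins. c \<le> rem \<tau>)" using coin_pos z by force
    then show ?thesis using z by simp
  next
    assume "\<exists>t m. t < T \<and> window_start t m \<and> m \<le> T \<and> rem \<tau> = rest t m"
    then obtain t m where h: "t < T" "window_start t m" "m \<le> T" "rem \<tau> = rest t m" by blast
    have g: "rem (Suc \<tau>) = rest t (window_end t m)" using greedy_step[OF h(2,3,1,4)] by blast
    have v: "window_start t (window_end t m)" using window_end_props h by blast
    show ?thesis
    proof (cases "window_end t m \<le> T")
      case True then show ?thesis using g v h by blast
    next
      case False
      then have n: "window_end t m = Suc T" using v by (simp add: window_start_def)
      show ?thesis
      proof (cases "Suc t < T")
        case True
        then show ?thesis using g n rest_row_end window_start_1 T_ge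
          by (intro disjI2 exI[of _ "Suc t"] exI[of _ 1]) auto
      next
        case False
        then have "t = T - 1" using h by simp
        then show ?thesis using g n rest_last by simp
      qed
    qed
  qed
qed

lemma win_coin_in_greedy_set:
  assumes "t < T" "window_start t m" "m \<le> T"
  shows "win_coin t m \<in> greedy_set Coins W"
proof -
  obtain \<tau> where "rem \<tau> = rest t m" using reach_rest[OF assms(1,2)] by blast
  then have "(\<exists>c\<in>Coins. c \<le> rem \<tau>) \<and> Max {c \<in> Coins. c \<le> rem \<tau>} = win_coin t m"
    using greedy_step[OF assms(2,3,1)] by blast
  then show ?thesis unfolding greedy_set_def by (intro CollectI exI[of _ \<tau>]) simp
qed

lemma greedy_set_obtain_win_coin:
  assumes "c \<in> greedy_set Coins W"
  obtains t m where "t < T" "window_start t m" "m \<le> T" "c = win_coin t m"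
proof -
  obtain \<tau> where \<tau>: "c = Max {c \<in> Coins. c \<le> rem \<tau>}" "\<exists>c\<in>Coins. c \<le> rem \<tau>"
    using assms unfolding greedy_set_def by blast
  have "rem \<tau> \<noteq> 0" using \<tau>(2) coin_pos by force
  then obtain t m where "t < T" "window_start t m" "m \<le> T" "rem \<tau> = rest t m"
    using greedy_rem_cases[of \<tau>] by blast
  then show ?thesis using that greedy_step \<tau>(1) by blast
qed

lemma last_win_coin: "win_coin (T - 1) 1 = trans_src (state (T - 1)) dollar blank blank 2"
proof -
  have shape: "head (T - 1) = 2" "tape (T - 1) 2 = blank" "tape (T - 1) 3 = blank"
    using halted_shape[OF last_row_halted] by auto
  then have "win_src (T - 1) 1 = trans_src (state (T - 1)) dollar blank blank 2"
    using window_trans_eq[OF window_start_1, of "T - 1"] endmarker_head_bounds[of "T - 1"]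
    by (simp add: numeral_2_eq_2 numeral_3_eq_3)
  moreover have "Suc (T - 1) = T" using T_ge by simp
  ultimately show ?thesis unfolding win_coin_def step_coin_def using scale_last scale_T by simp
qed

lemma query_coin_eq:
  "trans_coin \<delta> halting f g CARD('g) B T qacc dollar blank blank 2 T = trans_src qacc dollar blank blank 2"
  using trans_coin_eq[of 2 "T - 1" qacc dollar blank blank] T_ge scale_last scale_T
  unfolding step_coin_def by (simp add: Suc_diff_1)

lemma final_src_bounds:
  "b ^ (T - 1) \<le> trans_src q dollar blank blank 2" "trans_src q dollar blank blank 2 \<le> Z - 2"
proof -
  have T: "Suc (Suc (T - 2 - 1)) = T - 1" "Suc (Suc (Suc (T - 2 - 1))) = T" using T_ge by auto
  show "b ^ (T - 1) \<le> trans_src q dollar blank blank 2"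
    using trans_src_bounds(1)[of 2 q dollar blank blank, unfolded T(1)] .
  have "int (g dollar) * b ^ Suc (Suc (T - 2 - 1)) + pc q blank * b ^ Suc (T - 2 - 1)
      + int (g blank) * b ^ (T - 2 - 1) \<le> b ^ Suc (Suc (Suc (T - 2 - 1))) - 2"
  proof (rule three_digits_le)
    show "int (g dollar) \<le> b - 2" "int (g blank) \<le> b - 2"
      using g_range[of dollar] g_range[of blank] card_symbols_le by linarith+
    show "0 \<le> pc q blank" "pc q blank \<le> b - 2" using pc_range[of q blank] by linarith+
  qed (use b_gt_1 in auto)
  then show "trans_src q dollar blank blank 2 \<le> Z - 2" unfolding trans_src_def T(2) .
qed

lemma final_src_inj:
  "trans_src q dollar blank blank 2 = trans_src q' dollar blank blank 2 \<Longrightarrow> q = q'"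
  using b_gt_1 pc_inj by (simp add: trans_src_scaled)

lemma win_coin_eq_final_src:
  assumes "t < T" "window_start t m" "m \<le> T" "win_coin t m = trans_src q dollar blank blank 2"
  shows "t = T - 1 \<and> m = 1"
proof (cases "Suc t < T")
  case True
  have "window (win_src t m) (win_dst t m)" using win_coin_mem assms(1-3) by blast
  then have "Z - 1 \<le> win_src t m * Z - win_dst t m" by (auto dest: window_bounds)
  moreover have "1 \<le> scale (Suc t)" using scale_pos[OF True] by simp
  moreover have "1 \<le> Z" using b_gt_1 by simp
  ultimately have "(Z - 1) * 1 \<le> (win_src t m * Z - win_dst t m) * scale (Suc t)"
    by (intro mult_mono) auto
  moreover have "win_coin t m = (win_src t m * Z - win_dst t m) * scale (Suc t)"
    unfolding win_coin_def step_coin_def using scale_Suc[OF True] by (simp add: algebra_simps)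
  ultimately show ?thesis using final_src_bounds(2)[of q] assms(4) by simp
next
  case False
  then have t: "t = T - 1" "Suc t = T" using assms(1) by auto
  have "m = 1 \<or> 4 \<le> m"
    using assms(2) halted_shape[OF last_row_halted] t unfolding window_start_def by auto
  moreover have False if "4 \<le> m"
  proof -
    have "win_coin t m = copy_src (tape t m) m"
      using window_copy_eq[OF assms(2,3)] that halted_shape[OF last_row_halted] t scale_last scale_T
      unfolding win_coin_def step_coin_def by auto
    moreover have "b ^ Suc (T - m) \<le> b ^ (T - 1)" using that assms(3) T_ge by (intro pow_mono) auto
    ultimately show False
      using copy_src_less[of "tape t m" m] final_src_bounds(1)[of q] assms(4) by simp
  qed
  ultimately show ?thesis using t by auto
qed

lemma last_state_accepting_iff:
  "state (T - 1) = qacc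
    \<longleftrightarrow> trans_coin \<delta> halting f g CARD('g) B T qacc dollar blank blank 2 T \<in> greedy_set Coins W"
proof
  assume "state (T - 1) = qacc"
  moreover have "win_coin (T - 1) 1 \<in> greedy_set Coins W"
    using T_ge by (intro win_coin_in_greedy_set window_start_1) auto
  ultimately show "trans_coin \<delta> halting f g CARD('g) B T qacc dollar blank blank 2 T \<in> greedy_set Coins W"
    using last_win_coin query_coin_eq by simp
next
  assume "trans_coin \<delta> halting f g CARD('g) B T qacc dollar blank blank 2 T \<in> greedy_set Coins W"
  then obtain t m where "t < T" "window_start t m" "m \<le> T"
    "win_coin t m = trans_src qacc dollar blank blank 2"
    unfolding query_coin_eq by (rule greedy_set_obtain_win_coin) simp
  then show "state (T - 1) = qacc"
    using win_coin_eq_final_src last_win_coin final_src_inj by metis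
qed

end

theorem lemma3p1:
  fixes \<delta> :: "'q::finite \<Rightarrow> 'g::finite \<Rightarrow> 'q \<times> 'g \<times> dir"
    and q0 qacc qrej :: 'q
    and blank dollar :: 'g
    and \<Sigma> :: "'g set"
    and f :: "'q \<Rightarrow> nat" and g :: "'g \<Rightarrow> nat"
    and B :: nat
    and x :: "'g list"
    and T C_M ell :: nat
  assumes acc_rej: "qacc \<noteq> qrej"
    and Sigma: "\<Sigma> \<subseteq> UNIV - {blank}"
    and dollar_blank: "dollar \<noteq> blank"
    and x_in: "set x \<subseteq> \<Sigma>"
    and f_bij: "bij_betw f UNIV {1..CARD('q)}"
    and g_bij: "bij_betw g UNIV {1..CARD('g)}"
    and B_ge: "B \<ge> (CARD('q) + 1) * CARD('g) + 2"
    and left_end: "\<forall>q. q \<notin> {qacc, qrej} \<longrightarrow> (\<exists>q'. \<delta> q dollar = (q', dollar, R))"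
    and T_def: "T = C_M * length x ^ ell"
    and T_ge: "T \<ge> length x + 3"
    and halts: "\<exists>t < T. fst (tm_run \<delta> {qacc, qrej} (init_config q0 dollar blank x) t) \<in> {qacc, qrej}"
    and halt_shape: "\<forall>t. (case tm_run \<delta> {qacc, qrej} (init_config q0 dollar blank x) t of (q, h, a) \<Rightarrow>
                         q \<in> {qacc, qrej} \<longrightarrow> h = 2 \<and> a 2 = blank \<and> a 3 = blank)"
  shows "(\<exists>t. fst (tm_run \<delta> {qacc, qrej} (init_config q0 dollar blank x) t) = qacc)
     \<longleftrightarrow> trans_coin \<delta> {qacc, qrej} f g CARD('g) B T qacc dollar blank blank 2 T
           \<in> greedy_set (coin_set \<delta> {qacc, qrej} f g CARD('g) B T dollar)
                (encode f g CARD('g) B T (init_config q0 dollar blank x)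
                   * bpow B ((int T - 1) * int T))"
proof -
  interpret tableau \<delta> q0 qacc qrej blank dollar x T f g B
    using f_bij g_bij B_ge left_end T_ge halts halt_shape by unfold_locales auto
  show ?thesis
    using accepts_iff_last_state last_state_accepting_iff unfolding state_def run_def by simp
qed

end
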